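(* Fix a positive integer $n$, a nonzero $n$-partition $\lambda$ with $\lambda_n=0$, an $n$-semistandard tableau $T$ of shape $\lambda$, and $w\in S_n^\lambda$. Then $T\in\mathcal{D}_{\lambda,w}$ if and only if $\pi_T\le w$ in the Bruhat order, where $\pi_T$ is the final permutation of the greedy procedure described in the context.
   Context: Let $\lambda=(\lambda_1,\dots,\lambda_n)$ be weakly decreasing nonnegative integers with $\lambda_n=0$, $\lambda\neq0$, identified with its Young diagram. For $1\le j\le\lambda_1$ let $c_j$ be the length of column $j$; let $\zeta_1<\dots<\zeta_d$ be the distinct column lengths, $\zeta_0:=0$, $\zeta_{d+1}:=n$. Write $(j,i)$ for the box in column $j$, row $i$. Reading order: $(l,k)\le(j,i)$ iff $l<j$, or $l=j$ and $k\ge i$; convention $(j,c_j+1)$ means $(j-1,1)$. An $n$-semistandard tableau of shape $\lambda$ has entries in $[n]$, weakly increasing along rows and strictly increasing down columns; $T(j,i)$ denotes its entry, $C_j$ its $j$-th column, $\mathcal{T}_\lambda$ the set of such tableaux. A key is a tableau in which every value of $C_j$ appears in $C_{j-1}$ for $1<j\le\lambda_1$. Permutations are in one-line form. $S_n^\lambda$ is the set of $\phi\in S_n$ with $\phi_{\zeta_{h-1}+1}<\dots<\phi_{\zeta_h}$ for $1\le h\le d+1$. $Y_\lambda(\phi)$ is the key of shape $\lambda$ whose columns of length $\zeta_h$ contain $\phi_1,\dots,\phi_{\zeta_h}$ in increasing order ($1\le h\le d$). For $T\in\mathcal{T}_\lambda$, $R(T)$ denotes the right key of $T$ in the sense of Lascoux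 and Schützenberger. Define $\mathcal{D}_{\lambda,w}:=\{T\in\mathcal{T}_\lambda : R(T)\le Y_\lambda(w)\}$, where $\le$ compares tableaux of the same shape entrywise. Greedy procedure: $\pi^{(1,1)}$ has as first $c_1$ entries the entries of $C_1$ in increasing order, followed by the remaining elements of $[n]$ in increasing order. For locations $(j,i)$ with $j\ge2$, taken in reading order from $(2,c_2)$ to $(\lambda_1,1)$, define $\pi^{(j,i)}$ from $\pi:=\pi^{(j,i+1)}$: if $T(j-1,i)=T(j,i)$ set $\pi^{(j,i)}=\pi$; otherwise let $i_0=i$, and given $i_{x-1}$ with $\pi_{i_{x-1}}<T(j,i)$ let $i_x$ be the smallest index $>c_j$ with $\pi_{i_{x-1}}<\pi_{i_x}\le T(j,i)$, stopping at $i_m$ with $\pi_{i_m}=T(j,i)$; set $\pi^{(j,i)}_{i_x}=\pi_{i_{x-1}}$ ($1\le x\le m$), $\pi^{(j,i)}_{i_0}=\pi_{i_m}$, other entries unchanged. Then $\pi_T:=\pi^{(\lambda_1,1)}$. *)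

theory Defs
  imports Main "HOL-Combinatorics.Permutations"
begin

(* Conventions.
   n :: nat; a partition lambda is given by lam :: nat => nat, with parts lam 1, ..., lam n.
   A tableau is T :: nat => nat => nat, where T j i is the entry in column j, row i
   (both 1-based); only values at boxes of the shape matter. *)

definition is_partition :: "nat \<Rightarrow> (nat \<Rightarrow> nat) \<Rightarrow> bool" where
  "is_partition n lam \<longleftrightarrow>
     (\<forall>i i'. 1 \<le> i \<and> i \<le> i' \<and> i' \<le> n \<longrightarrow> lam i' \<le> lam i) \<and>
     lam n = 0 \<and> (\<exists>i\<in>{1..n}. lam i \<noteq> 0)"

definition col_len :: "nat \<Rightarrow> (nat \<Rightarrow> nat) \<Rightarrow> nat \<Rightarrow> nat" where
  "col_len n lam j = card {i. 1 \<le> i \<and> i \<le> n \<and> j \<le> lam i}"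

definition in_shape :: "nat \<Rightarrow> (nat \<Rightarrow> nat) \<Rightarrow> nat \<Rightarrow> nat \<Rightarrow> bool" where
  "in_shape n lam j i \<longleftrightarrow> 1 \<le> i \<and> i \<le> n \<and> 1 \<le> j \<and> j \<le> lam i"

definition semistandard :: "nat \<Rightarrow> (nat \<Rightarrow> nat) \<Rightarrow> (nat \<Rightarrow> nat \<Rightarrow> nat) \<Rightarrow> bool" where
  "semistandard n lam T \<longleftrightarrow>
     (\<forall>j i. in_shape n lam j i \<longrightarrow> 1 \<le> T j i \<and> T j i \<le> n) \<and>
     (\<forall>j i. in_shape n lam j i \<and> in_shape n lam (Suc j) i \<longrightarrow> T j i \<le> T (Suc j) i) \<and>
     (\<forall>j i. in_shape n lam j i \<and> in_shape n lam j (Suc i) \<longrightarrow> T j i < T j (Suc i))"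

(* S_n^lambda: permutations increasing on each block (zeta_{h-1}, zeta_h];
   the block boundaries zeta_1 < ... < zeta_d are exactly the column lengths *)
definition in_S_lambda :: "nat \<Rightarrow> (nat \<Rightarrow> nat) \<Rightarrow> (nat \<Rightarrow> nat) \<Rightarrow> bool" where
  "in_S_lambda n lam w \<longleftrightarrow> w permutes {1..n} \<and>
     (\<forall>p. 1 \<le> p \<and> p < n \<and> p \<notin> {col_len n lam j | j. 1 \<le> j \<and> j \<le> lam 1}
          \<longrightarrow> w p < w (Suc p))"

definition Y_key :: "nat \<Rightarrow> (nat \<Rightarrow> nat) \<Rightarrow> (nat \<Rightarrow> nat) \<Rightarrow> nat \<Rightarrow> nat \<Rightarrow> nat" where
  "Y_key n lam w j i = sorted_list_of_set (w ` {1..col_len n lam j}) ! (i - 1)"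

definition tab_le :: "nat \<Rightarrow> (nat \<Rightarrow> nat) \<Rightarrow> (nat \<Rightarrow> nat \<Rightarrow> nat) \<Rightarrow> (nat \<Rightarrow> nat \<Rightarrow> nat) \<Rightarrow> bool" where
  "tab_le n lam A B \<longleftrightarrow> (\<forall>j i. in_shape n lam j i \<longrightarrow> A j i \<le> B j i)"

(* ---------- Right key (Lascoux--Schuetzenberger), computed by Willis' scanning method ----------
   Column j of R(T) is obtained from columns j, j+1, ..., lam_1 of T: the entries of column j
   are taken from bottom to top; for each such starting entry x a scanning path is formed:
   in each later column h (left to right) the earliest (in reading order, i.e. bottommost)
   not-yet-scanned entry which is weakly larger than the current entry is appended to the path
   and marked as scanned (if there is none, column h is skipped). The last entry of the path
   is an entry of column j of R(T). *)

definition scan_step :: "nat \<Rightarrow> (nat \<Rightarrow> nat) \<Rightarrow> (nat \<Rightarrow> nat \<Rightarrow> nat)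
    \<Rightarrow> nat \<times> (nat \<times> nat) set \<Rightarrow> nat \<Rightarrow> nat \<times> (nat \<times> nat) set" where
  "scan_step n lam T st h =
     (let cur = fst st; M = snd st;
          Rs = {r. 1 \<le> r \<and> r \<le> col_len n lam h \<and> (h, r) \<notin> M \<and> cur \<le> T h r}
      in if Rs = {} then st else (T h (Max Rs), insert (h, Max Rs) M))"

definition scan_path :: "nat \<Rightarrow> (nat \<Rightarrow> nat) \<Rightarrow> (nat \<Rightarrow> nat \<Rightarrow> nat) \<Rightarrow> nat
    \<Rightarrow> (nat \<times> nat) set \<Rightarrow> nat \<Rightarrow> nat \<times> (nat \<times> nat) set" where
  "scan_path n lam T j M i = fold (\<lambda>h st. scan_step n lam T st h) [Suc j..<Suc (lam 1)] (T j i, M)"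

definition scan_ends :: "nat \<Rightarrow> (nat \<Rightarrow> nat) \<Rightarrow> (nat \<Rightarrow> nat \<Rightarrow> nat) \<Rightarrow> nat \<Rightarrow> nat list" where
  "scan_ends n lam T j =
     fst (fold (\<lambda>i (es, M). let (v, M') = scan_path n lam T j M i in (v # es, M'))
            (rev [1..<Suc (col_len n lam j)]) ([], {}))"

definition right_key :: "nat \<Rightarrow> (nat \<Rightarrow> nat) \<Rightarrow> (nat \<Rightarrow> nat \<Rightarrow> nat) \<Rightarrow> nat \<Rightarrow> nat \<Rightarrow> nat" where
  "right_key n lam T j i = sort (scan_ends n lam T j) ! (i - 1)"

definition D_set :: "nat \<Rightarrow> (nat \<Rightarrow> nat) \<Rightarrow> (nat \<Rightarrow> nat) \<Rightarrow> (nat \<Rightarrow> nat \<Rightarrow> nat) set" where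
  "D_set n lam w = {T. semistandard n lam T \<and> tab_le n lam (right_key n lam T) (Y_key n lam w)}"

(* ---------- Bruhat order on S_n ----------
   reflexive-transitive closure of u < u t, t = (a b) a transposition with l(u t) > l(u),
   i.e. a < b and u a < u b. *)
definition bruhat_cover :: "nat \<Rightarrow> ((nat \<Rightarrow> nat) \<times> (nat \<Rightarrow> nat)) set" where
  "bruhat_cover n = {(u, v). \<exists>a b. 1 \<le> a \<and> a < b \<and> b \<le> n \<and> u a < u b \<and>
                               v = u(a := u b, b := u a)}"

definition bruhat_le :: "nat \<Rightarrow> (nat \<Rightarrow> nat) \<Rightarrow> (nat \<Rightarrow> nat) \<Rightarrow> bool" where
  "bruhat_le n u v \<longleftrightarrow> u permutes {1..n} \<and> v permutes {1..n} \<and> (u, v) \<in> (bruhat_cover n)\<^sup>*"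

definition pi_init :: "nat \<Rightarrow> (nat \<Rightarrow> nat) \<Rightarrow> (nat \<Rightarrow> nat \<Rightarrow> nat) \<Rightarrow> nat \<Rightarrow> nat" where
  "pi_init n lam T p =
     (let c1 = col_len n lam 1;
          rest = sorted_list_of_set ({1..n} - T 1 ` {1..c1})
      in if p < 1 \<or> n < p then p else if p \<le> c1 then T 1 p else rest ! (p - c1 - 1))"

(* the index sequence i_0, i_1, ..., i_m (fuel bounds the length) *)
fun greedy_chain :: "nat \<Rightarrow> (nat \<Rightarrow> nat) \<Rightarrow> nat \<Rightarrow> nat \<Rightarrow> nat \<Rightarrow> nat \<Rightarrow> nat list" where
  "greedy_chain n pi c t k 0 = [k]"
| "greedy_chain n pi c t k (Suc f) =
     (if pi k = t then [k]
      else k # greedy_chain n pi c t (LEAST l. c < l \<and> l \<le> n \<and> pi k < pi l \<and> pi l \<le> t) f)"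

(* pi'_{i_x} = pi_{i_{x-1}} (1 <= x <= m), pi'_{i_0} = pi_{i_m} *)
definition cyc_update :: "(nat \<Rightarrow> nat) \<Rightarrow> nat list \<Rightarrow> nat \<Rightarrow> nat" where
  "cyc_update pi ks = (fold (\<lambda>(a, b) f. f(b := pi a)) (zip ks (tl ks)) pi)(hd ks := pi (last ks))"

definition greedy_step :: "nat \<Rightarrow> (nat \<Rightarrow> nat) \<Rightarrow> (nat \<Rightarrow> nat \<Rightarrow> nat)
    \<Rightarrow> (nat \<Rightarrow> nat) \<Rightarrow> nat \<times> nat \<Rightarrow> nat \<Rightarrow> nat" where
  "greedy_step n lam T pi loc =
     (let j = fst loc; i = snd loc in
      if T (j - 1) i = T j i then pi
      else cyc_update pi (greedy_chain n pi (col_len n lam j) (T j i) i n))"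

definition greedy_locs :: "nat \<Rightarrow> (nat \<Rightarrow> nat) \<Rightarrow> (nat \<times> nat) list" where
  "greedy_locs n lam = concat (map (\<lambda>j. map (\<lambda>i. (j, i)) (rev [1..<Suc (col_len n lam j)]))
                                  [2..<Suc (lam 1)])"

definition pi_T :: "nat \<Rightarrow> (nat \<Rightarrow> nat) \<Rightarrow> (nat \<Rightarrow> nat \<Rightarrow> nat) \<Rightarrow> nat \<Rightarrow> nat" where
  "pi_T n lam T = fold (\<lambda>loc pi. greedy_step n lam T pi loc) (greedy_locs n lam) (pi_init n lam T)"

end

theory Submission
  imports Defs
begin

text \<open>Both sides of the equivalence are dominance conditions on the prefix counts
  \<open>N u k x = #{p \<le> k. u p \<le> x}\<close>. By the tableau criterion, \<open>u \<le> w\<close> in the Bruhat order iff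
  \<open>N w k x \<le> N u k x\<close> for all \<open>k\<close> and \<open>x\<close>: a covering swap can only lower the counts, and
  conversely a swap at the first position where \<open>u\<close> and \<open>w\<close> differ moves \<open>u\<close> up towards
  \<open>w\<close> without destroying the dominance. If \<open>u\<close> and \<open>w\<close> increase between consecutive
  column lengths, the counts at intermediate \<open>k\<close> are interpolated from those at the column
  lengths, so only \<open>k = c\<^sub>j\<close> matters.

  On the tableau side, comparing the sorted columns of \<open>R(T)\<close> and \<open>Y\<^sub>\<lambda>(w)\<close> is again
  dominance at \<open>k = c\<^sub>j\<close>, because column \<open>j\<close> of the right key is the set \<open>\<pi>\<^sub>T {1..c\<^sub>j}\<close>.
  This is the invariant of the greedy procedure: once column \<open>H\<close> has been processed,
  \<open>\<pi> {1..c\<^sub>h}\<close> is the set of ends of the scanning paths of column \<open>h\<close> in the tableau cut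
  off after column \<open>H\<close>. Scanning one more column \<open>t\<^sub>1 < \<dots> < t\<^sub>c\<close> bumps that set by
  \<open>t\<^sub>c, \<dots>, t\<^sub>1\<close>, where bumping \<open>t\<close> into a set \<open>P\<close> not containing \<open>t\<close> replaces the largest element
  of \<open>P\<close> below \<open>t\<close> by \<open>t\<close>; and one cyclic update of the greedy procedure performs such a bump on all
  prefix sets of length at least \<open>c\<close> at once.\<close>

definition count_le :: "nat set \<Rightarrow> nat \<Rightarrow> nat" where
  "count_le A x = card {a \<in> A. a \<le> x}"

definition prefix_count :: "(nat \<Rightarrow> nat) \<Rightarrow> nat \<Rightarrow> nat \<Rightarrow> nat" where
  "prefix_count u k x = card {p \<in> {1..k}. u p \<le> x}"

lemma count_le_image:
  assumes "inj_on u {1..k}"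
  shows "count_le (u ` {1..k}) x = prefix_count u k x"
proof -
  have "{a \<in> u ` {1..k}. a \<le> x} = u ` {p \<in> {1..k}. u p \<le> x}" by auto
  moreover have "inj_on u {p \<in> {1..k}. u p \<le> x}" using assms by (rule inj_on_subset) auto
  ultimately show ?thesis unfolding count_le_def prefix_count_def by (simp add: card_image)
qed

lemma count_le_eq_card_indices:
  assumes "finite A"
  shows "count_le A x = card {j. j < card A \<and> sorted_list_of_set A ! j \<le> x}"
proof -
  let ?s = "sorted_list_of_set A"
  have "length ?s = card A" by simp
  then have "{a \<in> set ?s. a \<le> x} = (\<lambda>j. ?s ! j) ` {j. j < card A \<and> ?s ! j \<le> x}"
    by (auto simp: in_set_conv_nth)
  then have "{a \<in> A. a \<le> x} = (\<lambda>j. ?s ! j) ` {j. j < card A \<and> ?s ! j \<le> x}"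
    using assms by simp
  moreover have "inj_on (\<lambda>j. ?s ! j) {j. j < card A \<and> ?s ! j \<le> x}"
    by (auto intro!: inj_onI simp: nth_eq_iff_index_eq)
  ultimately show ?thesis unfolding count_le_def by (simp add: card_image)
qed

lemma sorted_list_of_set_nth_le_iff:
  assumes "finite A" "i < card A"
  shows "sorted_list_of_set A ! i \<le> x \<longleftrightarrow> i < count_le A x"
proof -
  let ?s = "sorted_list_of_set A"
  let ?J = "{j. j < card A \<and> ?s ! j \<le> x}"
  have mono: "?s ! j \<le> ?s ! i" if "j \<le> i" "i < card A" for i j
    using that by (intro sorted_nth_mono) auto
  show ?thesis
  proof
    assume "?s ! i \<le> x"
    then have "{..i} \<subseteq> ?J" using assms(2) mono by (auto intro: order_trans)
    then have "card {..i} \<le> card ?J" by (intro card_mono) auto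
    then show "i < count_le A x" using count_le_eq_card_indices[OF assms(1)] by simp
  next
    assume "i < count_le A x"
    show "?s ! i \<le> x"
    proof (rule ccontr)
      assume "\<not> ?s ! i \<le> x"
      then have "?J \<subseteq> {..<i}" using mono by (force simp: not_less[symmetric])
      then have "card ?J \<le> i" using card_mono[of "{..<i}" ?J] by simp
      then show False using \<open>i < count_le A x\<close> count_le_eq_card_indices[OF assms(1)] by simp
    qed
  qed
qed

lemma sorted_list_of_set_le_iff_count_le:
  assumes "finite A" "finite B" "card A = card B"
  shows "(\<forall>i < card A. sorted_list_of_set A ! i \<le> sorted_list_of_set B ! i)
     \<longleftrightarrow> (\<forall>x. count_le B x \<le> count_le A x)"
proof
  assume le: "\<forall>i < card A. sorted_list_of_set A ! i \<le> sorted_list_of_set B ! i"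
  show "\<forall>x. count_le B x \<le> count_le A x"
  proof
    fix x
    show "count_le B x \<le> count_le A x"
    proof (cases "count_le B x = 0")
      case False
      have "count_le B x \<le> card B" unfolding count_le_def using assms by (intro card_mono) auto
      then have i: "count_le B x - 1 < card B" using False by simp
      then have "sorted_list_of_set B ! (count_le B x - 1) \<le> x"
        using sorted_list_of_set_nth_le_iff[OF assms(2)] False by simp
      then have "sorted_list_of_set A ! (count_le B x - 1) \<le> x"
        using le i assms(3) by (metis le_trans)
      then show ?thesis using sorted_list_of_set_nth_le_iff[OF assms(1)] i assms(3) by simp
    qed simp
  qed
next
  assume dom: "\<forall>x. count_le B x \<le> count_le A x"
  show "\<forall>i < card A. sorted_list_of_set A ! i \<le> sorted_list_of_set B ! i"
  proof (intro allI impI)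
    fix i assume i: "i < card A"
    let ?x = "sorted_list_of_set B ! i"
    have "i < count_le B ?x" using sorted_list_of_set_nth_le_iff[OF assms(2), of i ?x] i assms(3) by simp
    then have "i < count_le A ?x" using dom by (meson le_trans not_le)
    then show "sorted_list_of_set A ! i \<le> ?x" using sorted_list_of_set_nth_le_iff[OF assms(1) i] by simp
  qed
qed

lemma shift_index_iff:
  fixes k :: nat
  shows "(\<forall>i. 1 \<le> i \<and> i \<le> k \<longrightarrow> P (i - 1)) \<longleftrightarrow> (\<forall>i < k. P i)"
proof
  assume H: "\<forall>i. 1 \<le> i \<and> i \<le> k \<longrightarrow> P (i - 1)"
  show "\<forall>i < k. P i"
  proof (intro allI impI)
    fix i assume "i < k"
    then show "P i" using H[rule_format, of "Suc i"] by simp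
  qed
next
  assume H: "\<forall>i < k. P i"
  show "\<forall>i. 1 \<le> i \<and> i \<le> k \<longrightarrow> P (i - 1)"
  proof (intro allI impI)
    fix i assume "1 \<le> i \<and> i \<le> k"
    then have "i - 1 < k" by linarith
    then show "P (i - 1)" using H by simp
  qed
qed

lemma sorted_image_le_iff_prefix_count_le:
  assumes "inj_on u {1..k}" "inj_on w {1..k}"
  shows "(\<forall>i. 1 \<le> i \<and> i \<le> k \<longrightarrow>
            sorted_list_of_set (u ` {1..k}) ! (i - 1) \<le> sorted_list_of_set (w ` {1..k}) ! (i - 1))
     \<longleftrightarrow> (\<forall>x. prefix_count w k x \<le> prefix_count u k x)"
proof -
  have card: "card (u ` {1..k}) = k" "card (w ` {1..k}) = k"
    using card_image[OF assms(1)] card_image[OF assms(2)] by simp_all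
  have "(\<forall>i. 1 \<le> i \<and> i \<le> k \<longrightarrow>
            sorted_list_of_set (u ` {1..k}) ! (i - 1) \<le> sorted_list_of_set (w ` {1..k}) ! (i - 1))
     \<longleftrightarrow> (\<forall>i < card (u ` {1..k}). sorted_list_of_set (u ` {1..k}) ! i \<le> sorted_list_of_set (w ` {1..k}) ! i)"
    unfolding card by (rule shift_index_iff)
  also have "\<dots> \<longleftrightarrow> (\<forall>x. count_le (w ` {1..k}) x \<le> count_le (u ` {1..k}) x)"
    using card by (intro sorted_list_of_set_le_iff_count_le) auto
  finally show ?thesis unfolding count_le_image[OF assms(1)] count_le_image[OF assms(2)] .
qed

section \<open>The tableau criterion for the Bruhat order\<close>

lemma prefix_count_0 [simp]: "prefix_count u 0 x = 0"
  unfolding prefix_count_def by simp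

lemma prefix_count_Suc: "prefix_count u (Suc k) x = prefix_count u k x + (if u (Suc k) \<le> x then 1 else 0)"
proof -
  have "{p \<in> {1..Suc k}. u p \<le> x} = {p \<in> {1..k}. u p \<le> x} \<union> (if u (Suc k) \<le> x then {Suc k} else {})"
    by (auto simp: le_Suc_eq)
  then show ?thesis unfolding prefix_count_def by (auto simp: card_insert_if)
qed

lemma prefix_count_cong: "(\<And>p. 1 \<le> p \<Longrightarrow> p \<le> k \<Longrightarrow> u p = w p) \<Longrightarrow> prefix_count u k x = prefix_count w k x"
  unfolding prefix_count_def by (intro arg_cong[where f = card]) auto

lemma prefix_count_eq_sum: "prefix_count u k x = (\<Sum>p\<in>{1..k}. if u p \<le> x then 1 else 0)"
proof -
  have "{p \<in> {1..k}. u p \<le> x} = {1..k} \<inter> {p. u p \<le> x}" by auto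
  then show ?thesis unfolding prefix_count_def by (simp add: sum.If_cases)
qed

lemma prefix_count_permutes:
  assumes "u permutes {1..n}"
  shows "prefix_count u n x = card {y \<in> {1..n}. y \<le> x}"
proof -
  have "count_le (u ` {1..n}) x = prefix_count u n x"
    using permutes_inj_on[OF assms] by (rule count_le_image)
  then show ?thesis unfolding count_le_def using permutes_image[OF assms] by simp
qed

definition segment_count :: "(nat \<Rightarrow> nat) \<Rightarrow> nat \<Rightarrow> nat \<Rightarrow> nat \<Rightarrow> nat" where
  "segment_count u a k x = card {p \<in> {Suc a..k}. u p \<le> x}"

lemma prefix_count_split:
  assumes "a \<le> k"
  shows "prefix_count u k x = prefix_count u a x + segment_count u a k x"
proof -
  have split: "{p \<in> {1..k}. u p \<le> x} = {p \<in> {1..a}. u p \<le> x} \<union> {p \<in> {Suc a..k}. u p \<le> x}"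
    using assms by auto
  show ?thesis unfolding prefix_count_def segment_count_def split by (rule card_Un_disjoint) auto
qed

lemma segment_count_mono: "x \<le> y \<Longrightarrow> segment_count u a k x \<le> segment_count u a k y"
  unfolding segment_count_def by (intro card_mono) auto

lemma sum_prefix_swap:
  fixes u :: "nat \<Rightarrow> 'a" and f :: "'a \<Rightarrow> 'b::comm_monoid_add"
  assumes "1 \<le> a" "a < b"
  shows "(\<Sum>p\<in>{1..k}. f ((u(a := u b, b := u a)) p)) + (if a \<le> k \<and> k < b then f (u a) else 0)
       = (\<Sum>p\<in>{1..k}. f (u p)) + (if a \<le> k \<and> k < b then f (u b) else 0)"
proof (induction k)
  case (Suc k)
  have sum_Suc: "(\<Sum>p\<in>{1..Suc k}. g p) = g (Suc k) + (\<Sum>p\<in>{1..k}. g p)" for g :: "nat \<Rightarrow> 'b"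
    by (simp add: add.commute)
  consider "Suc k < a \<or> b < Suc k" | "Suc k = a" | "a < Suc k \<and> Suc k < b" | "Suc k = b"
    by linarith
  then show ?case
  proof cases
    case 3
    then show ?thesis unfolding sum_Suc using Suc.IH assms by (simp add: add.assoc)
  qed (use Suc.IH assms in \<open>auto simp: sum_Suc add_ac\<close>)
qed (use assms in simp)

lemma prefix_count_swap:
  assumes "1 \<le> a" "a < b"
  shows "prefix_count (u(a := u b, b := u a)) k x + (if a \<le> k \<and> k < b then (if u a \<le> x then 1 else 0) else 0)
       = prefix_count u k x + (if a \<le> k \<and> k < b then (if u b \<le> x then 1 else 0) else 0)"
  unfolding prefix_count_eq_sum using sum_prefix_swap[OF assms, of "\<lambda>y. if y \<le> x then 1 else 0" u k] by simp

lemma bruhat_cover_permutes: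
  assumes "(u, v) \<in> bruhat_cover n" "u permutes {1..n}"
  shows "v permutes {1..n}"
proof -
  obtain a b where ab: "1 \<le> a" "a < b" "b \<le> n" "v = u(a := u b, b := u a)"
    using assms(1) unfolding bruhat_cover_def by auto
  have "v = u \<circ> transpose a b" using ab by (auto simp: fun_eq_iff transpose_def)
  moreover have "transpose a b permutes {1..n}" using ab by (intro permutes_swap_id) auto
  ultimately show ?thesis using assms(2) permutes_compose by blast
qed

lemma prefix_count_bruhat_cover:
  assumes "(u, v) \<in> bruhat_cover n"
  shows "prefix_count v k x \<le> prefix_count u k x"
proof -
  obtain a b where ab: "1 \<le> a" "a < b" "u a < u b" "v = u(a := u b, b := u a)"
    using assms unfolding bruhat_cover_def by auto
  show ?thesis using prefix_count_swap[OF ab(1,2), of u k x] ab by (auto split: if_splits)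
qed

lemma prefix_count_bruhat_le:
  assumes "(u, w) \<in> (bruhat_cover n)\<^sup>*"
  shows "prefix_count w k x \<le> prefix_count u k x"
  using assms by (induction rule: rtrancl_induct) (auto intro: order_trans prefix_count_bruhat_cover)

definition prefix_sum_weight :: "nat \<Rightarrow> (nat \<Rightarrow> nat) \<Rightarrow> nat" where
  "prefix_sum_weight n u = (\<Sum>k\<in>{1..n}. \<Sum>p\<in>{1..k}. u p)"

lemma prefix_sum_weight_le:
  assumes "u permutes {1..n}"
  shows "prefix_sum_weight n u \<le> n * n * n"
proof -
  have "(\<Sum>p\<in>{1..k}. u p) \<le> n * n" if "k \<in> {1..n}" for k
  proof -
    have "(\<Sum>p\<in>{1..k}. u p) \<le> (\<Sum>p\<in>{1..k}. n)"
      using that assms by (intro sum_mono) (auto dest: permutes_in_image)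
    also have "\<dots> \<le> n * n" using that by simp
    finally show ?thesis .
  qed
  then have "prefix_sum_weight n u \<le> (\<Sum>k\<in>{1..n}. n * n)"
    unfolding prefix_sum_weight_def by (intro sum_mono) auto
  then show ?thesis by simp
qed

lemma prefix_sum_weight_swap_less:
  assumes "1 \<le> a" "a < b" "b \<le> n" "u a < u b"
  shows "prefix_sum_weight n u < prefix_sum_weight n (u(a := u b, b := u a))"
  unfolding prefix_sum_weight_def
proof (rule sum_strict_mono_ex1)
  have sums: "(\<Sum>p\<in>{1..k}. (u(a := u b, b := u a)) p) + (if a \<le> k \<and> k < b then u a else 0)
      = (\<Sum>p\<in>{1..k}. u p) + (if a \<le> k \<and> k < b then u b else 0)" for k
    using sum_prefix_swap[OF assms(1,2), of id u k] by (simp only: id_apply)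
  show "\<forall>k\<in>{1..n}. (\<Sum>p\<in>{1..k}. u p) \<le> (\<Sum>p\<in>{1..k}. (u(a := u b, b := u a)) p)"
  proof
    fix k
    show "(\<Sum>p\<in>{1..k}. u p) \<le> (\<Sum>p\<in>{1..k}. (u(a := u b, b := u a)) p)"
      using sums[of k] assms(4) by (cases "a \<le> k \<and> k < b") simp_all
  qed
  show "\<exists>k\<in>{1..n}. (\<Sum>p\<in>{1..k}. u p) < (\<Sum>p\<in>{1..k}. (u(a := u b, b := u a)) p)"
    using sums[of a] assms by (intro bexI[of _ a]) auto
qed simp

text \<open>The swap lowers a prefix count only for \<open>a \<le> k < b\<close> and \<open>u a \<le> x < u b\<close>. There the gap
  condition makes the positions in \<open>(a, k]\<close> with value \<open>\<le> x\<close> the same as those with value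
  \<open>\<le> w a\<close>, and at the threshold \<open>w a\<close> the dominance over \<open>w\<close> has one unit to spare,
  coming from position \<open>a\<close>.\<close>
lemma prefix_count_le_swap:
  assumes a: "a = Suc a'" "a < b" and ub: "u a < u b" "u b \<le> w a"
    and agree: "\<And>x. prefix_count u a' x = prefix_count w a' x"
    and gap: "\<And>p. a < p \<Longrightarrow> p < b \<Longrightarrow> \<not> (u a < u p \<and> u p \<le> w a)"
    and dom: "\<And>x. prefix_count w k x \<le> prefix_count u k x"
  shows "prefix_count w k x \<le> prefix_count (u(a := u b, b := u a)) k x"
proof -
  let ?v = "u(a := u b, b := u a)"
  have swap: "prefix_count ?v k x + (if a \<le> k \<and> k < b then (if u a \<le> x then 1 else 0) else 0)
      = prefix_count u k x + (if a \<le> k \<and> k < b then (if u b \<le> x then 1 else 0) else 0)"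
    using prefix_count_swap[of a b u k x] a by simp
  show ?thesis
  proof (cases "a \<le> k \<and> k < b \<and> u a \<le> x \<and> x < u b")
    case False
    then have "prefix_count ?v k x = prefix_count u k x" using swap ub by (auto split: if_splits)
    then show ?thesis using dom by simp
  next
    case True
    then have ak: "a \<le> k" "k < b" and x: "u a \<le> x" "x < w a" using ub by auto
    have "segment_count u a k x = segment_count u a k (w a)"
      unfolding segment_count_def
    proof (intro arg_cong[where f = card] Collect_cong conj_cong refl)
      fix p assume "p \<in> {Suc a..k}"
      then show "u p \<le> x \<longleftrightarrow> u p \<le> w a" using gap[of p] ak x ub by auto
    qed
    moreover have "segment_count w a k (w a) \<le> segment_count u a k (w a)"
      using dom[of "w a"] agree[of "w a"] prefix_count_split[OF ak(1), of w "w a"]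
        prefix_count_split[OF ak(1), of u "w a"] ub a by (simp add: prefix_count_Suc)
    ultimately have "segment_count w a k x \<le> segment_count u a k x"
      using segment_count_mono[of x "w a" w a k] x by simp
    then have "prefix_count w k x + 1 \<le> prefix_count u k x"
      using prefix_count_split[OF ak(1), of w x] prefix_count_split[OF ak(1), of u x]
        agree[of x] a x by (simp add: prefix_count_Suc)
    then show ?thesis using swap True by simp
  qed
qed

lemma first_difference_less:
  assumes u: "u permutes {1..n}" and w: "w permutes {1..n}" and "u \<noteq> w"
    and dom: "\<And>k x. k \<le> n \<Longrightarrow> prefix_count w k x \<le> prefix_count u k x"
  obtains a where "a \<in> {1..n}" "\<And>p. p < a \<Longrightarrow> u p = w p" "u a < w a"
proof
  define a where "a = (LEAST p. u p \<noteq> w p)"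
  obtain p0 where "u p0 \<noteq> w p0" using \<open>u \<noteq> w\<close> by auto
  then have ua: "u a \<noteq> w a" unfolding a_def by (rule LeastI)
  show below: "\<And>p. p < a \<Longrightarrow> u p = w p" unfolding a_def using not_less_Least by blast
  show a_in: "a \<in> {1..n}"
  proof (rule ccontr)
    assume "a \<notin> {1..n}"
    then have "u a = a" "w a = a" using u w by (simp_all add: permutes_not_in)
    then show False using ua by simp
  qed
  then obtain a' where a': "a = Suc a'" by (cases a) auto
  have "prefix_count u a' x = prefix_count w a' x" for x
    using below a' by (intro prefix_count_cong) auto
  then have "\<not> w a < u a \<or> prefix_count u a (w a) < prefix_count w a (w a)"
    using a' by (auto simp: prefix_count_Suc)
  then show "u a < w a" using dom[of a "w a"] a_in ua by fastforce
qed

lemma bruhat_cover_step_towards: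
  assumes u: "u permutes {1..n}" and w: "w permutes {1..n}" and "u \<noteq> w"
    and dom: "\<And>k x. k \<le> n \<Longrightarrow> prefix_count w k x \<le> prefix_count u k x"
  obtains v where "(u, v) \<in> bruhat_cover n" "prefix_sum_weight n u < prefix_sum_weight n v"
    "\<And>k x. k \<le> n \<Longrightarrow> prefix_count w k x \<le> prefix_count v k x"
proof -
  obtain a where a_in: "a \<in> {1..n}" and below: "\<And>p. p < a \<Longrightarrow> u p = w p" and uwa: "u a < w a"
    using first_difference_less[OF assms] by blast
  then obtain a' where a': "a = Suc a'" by (cases a) auto
  have agree: "prefix_count u a' x = prefix_count w a' x" for x
    using below a' by (intro prefix_count_cong) auto
  obtain b' where b': "b' \<in> {1..n}" "u b' = w a"
    using permutes_in_image[OF w] a_in permutes_image[OF u] by (metis imageE)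
  have "a < b'"
  proof (rule ccontr)
    assume "\<not> a < b'"
    then have "b' < a" using b' uwa by (cases "b' = a") auto
    then show False using below b' permutes_inj[OF w] uwa by (metis injD less_irrefl)
  qed
  define P where "P p \<longleftrightarrow> a < p \<and> p \<le> n \<and> u a < u p \<and> u p \<le> w a" for p
  define b where "b = (LEAST p. P p)"
  have "P b'" unfolding P_def using \<open>a < b'\<close> b' uwa by auto
  then have ab: "a < b" "b \<le> n" "u a < u b" "u b \<le> w a"
    using LeastI[of P b'] unfolding b_def P_def by auto
  have gap: "\<not> (u a < u p \<and> u p \<le> w a)" if "a < p" "p < b" for p
    using not_less_Least[of p P] that ab unfolding b_def P_def by auto
  show thesis
  proof
    show "(u, u(a := u b, b := u a)) \<in> bruhat_cover n"
      unfolding bruhat_cover_def using ab a_in by auto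
    show "prefix_sum_weight n u < prefix_sum_weight n (u(a := u b, b := u a))"
      using prefix_sum_weight_swap_less ab a_in by simp
    show "prefix_count w k x \<le> prefix_count (u(a := u b, b := u a)) k x" if "k \<le> n" for k x
      using prefix_count_le_swap[OF a' ab(1,3,4) agree gap dom[OF that]] by blast
  qed
qed

lemma bruhat_cover_rtrancl_if_prefix_count_le:
  assumes "u permutes {1..n}" "w permutes {1..n}"
    and "\<And>k x. k \<le> n \<Longrightarrow> prefix_count w k x \<le> prefix_count u k x"
  shows "(u, w) \<in> (bruhat_cover n)\<^sup>*"
  using assms
proof (induction u rule: measure_induct_rule[where f = "\<lambda>u. n * n * n - prefix_sum_weight n u"])
  case (less u)
  show ?case
  proof (cases "u = w")
    case False
    then obtain v where v: "(u, v) \<in> bruhat_cover n" "prefix_sum_weight n u < prefix_sum_weight n v"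
      "\<And>k x. k \<le> n \<Longrightarrow> prefix_count w k x \<le> prefix_count v k x"
      using bruhat_cover_step_towards less.prems by metis
    have v_perm: "v permutes {1..n}" using bruhat_cover_permutes v(1) less.prems(1) .
    have "n * n * n - prefix_sum_weight n v < n * n * n - prefix_sum_weight n u"
      using v(2) prefix_sum_weight_le[OF v_perm] by simp
    then have "(v, w) \<in> (bruhat_cover n)\<^sup>*" using less.IH v_perm less.prems(2) v(3) by blast
    then show ?thesis using v(1) by (meson converse_rtrancl_into_rtrancl)
  qed simp
qed

lemma bruhat_le_iff_prefix_count_le:
  assumes "u permutes {1..n}" "w permutes {1..n}"
  shows "bruhat_le n u w \<longleftrightarrow> (\<forall>k x. k \<le> n \<longrightarrow> prefix_count w k x \<le> prefix_count u k x)"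
  using assms bruhat_cover_rtrancl_if_prefix_count_le prefix_count_bruhat_le
  unfolding bruhat_le_def by blast

lemma down_closed_eq_atLeastLessThan:
  fixes S :: "nat set"
  assumes "S \<subseteq> {a..b}" and closed: "\<And>p q. q \<in> S \<Longrightarrow> a \<le> p \<Longrightarrow> p \<le> q \<Longrightarrow> p \<in> S"
  shows "S = {a..<a + card S}"
proof (cases "S = {}")
  case False
  have fin: "finite S" using assms(1) finite_subset by blast
  then have "Max S \<in> S" using False by simp
  have "a \<le> Max S" using \<open>Max S \<in> S\<close> assms(1) by auto
  have S: "S = {a..Max S}"
  proof
    show "S \<subseteq> {a..Max S}" using assms(1) fin by auto
    show "{a..Max S} \<subseteq> S" using closed[OF \<open>Max S \<in> S\<close>] by auto
  qed
  then have "card S = Suc (Max S) - a" by (metis card_atLeastAtMost)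
  then have "{a..<a + card S} = {a..Max S}" using \<open>a \<le> Max S\<close> by auto
  then show ?thesis using S by simp
qed simp

text \<open>With \<open>Z\<close> the set of column lengths, this is the condition defining \<open>S\<^sub>n\<^sup>\<lambda>\<close>.\<close>
definition increasing_off :: "nat \<Rightarrow> nat set \<Rightarrow> (nat \<Rightarrow> nat) \<Rightarrow> bool" where
  "increasing_off n Z u \<longleftrightarrow> (\<forall>p. 1 \<le> p \<and> p < n \<and> p \<notin> Z \<longrightarrow> u p < u (Suc p))"

lemma segment_count_increasing:
  assumes inc: "\<And>p. l < p \<Longrightarrow> p < r \<Longrightarrow> u p < u (Suc p)" and "l \<le> k" "k \<le> r"
  shows "segment_count u l k x = min (k - l) (segment_count u l r x)"
proof -
  define D where "D = {p \<in> {Suc l..r}. u p \<le> x}"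
  have mono: "u p \<le> u q" if "l < p" "p \<le> q" "q \<le> r" for p q
  proof (rule lift_Suc_mono_le_ivl[where f = u and N = "{l<..<r}"])
    show "u m \<le> u (Suc m)" if "m \<in> {l<..<r}" for m using inc[of m] that by simp
  qed (use that in auto)
  have D: "D = {Suc l..<Suc l + card D}"
  proof (rule down_closed_eq_atLeastLessThan[where b = r])
    show "D \<subseteq> {Suc l..r}" unfolding D_def by auto
    show "p \<in> D" if "q \<in> D" "Suc l \<le> p" "p \<le> q" for p q
      using that mono[of p q] unfolding D_def by auto
  qed
  have "{p \<in> {Suc l..k}. u p \<le> x} = {Suc l..k} \<inter> D"
    using assms(3) unfolding D_def by auto
  also have "\<dots> = {Suc l..<min (Suc k) (Suc l + card D)}"
    by (subst D) auto
  finally have "segment_count u l k x = min (Suc k) (Suc l + card D) - Suc l"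
    unfolding segment_count_def by simp
  then show ?thesis using assms(2) unfolding segment_count_def D_def[symmetric] by simp
qed

lemma prefix_count_increasing:
  assumes "\<And>p. l < p \<Longrightarrow> p < r \<Longrightarrow> u p < u (Suc p)" "l \<le> k" "k \<le> r"
  shows "prefix_count u k x = min (prefix_count u l x + (k - l)) (prefix_count u r x)"
  using prefix_count_split[OF assms(2), of u x] prefix_count_split[of l r u x] assms(2,3)
    segment_count_increasing[of l r u k x, OF assms] by simp

lemma prefix_count_le_if_le_on_breaks:
  assumes u: "u permutes {1..n}" "increasing_off n Z u"
    and w: "w permutes {1..n}" "increasing_off n Z w"
    and dom: "\<And>z x. z \<in> Z \<Longrightarrow> z \<le> n \<Longrightarrow> prefix_count w z x \<le> prefix_count u z x"
    and "k \<le> n"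
  shows "prefix_count w k x \<le> prefix_count u k x"
proof -
  define Z' where "Z' = {z \<in> insert 0 (insert n Z). z \<le> n}"
  have dom': "prefix_count w z x \<le> prefix_count u z x" if "z \<in> Z'" for z
    using that dom prefix_count_permutes[OF u(1)] prefix_count_permutes[OF w(1)]
    unfolding Z'_def by auto
  have fin: "finite Z'" unfolding Z'_def by simp
  define l where "l = Max {z \<in> Z'. z \<le> k}"
  define r where "r = Min {z \<in> Z'. k \<le> z}"
  have "0 \<in> {z \<in> Z'. z \<le> k}" "n \<in> {z \<in> Z'. k \<le> z}" using \<open>k \<le> n\<close> unfolding Z'_def by auto
  then have "l \<in> {z \<in> Z'. z \<le> k}" "r \<in> {z \<in> Z'. k \<le> z}"
    unfolding l_def r_def using fin by (intro Max_in Min_in; auto)+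
  then have l: "l \<in> Z'" "l \<le> k" and r: "r \<in> Z'" "k \<le> r" by auto
  have "p \<notin> Z'" if "l < p" "p < r" for p
    using that Max_ge[of "{z \<in> Z'. z \<le> k}" p] Min_le[of "{z \<in> Z'. k \<le> z}" p] fin
    unfolding l_def[symmetric] r_def[symmetric] by (cases "p \<le> k") auto
  then have between: "1 \<le> p \<and> p < n \<and> p \<notin> Z" if "l < p" "p < r" for p
    using that r unfolding Z'_def by auto
  have "\<And>p. l < p \<Longrightarrow> p < r \<Longrightarrow> u p < u (Suc p)" "\<And>p. l < p \<Longrightarrow> p < r \<Longrightarrow> w p < w (Suc p)"
    using u(2) w(2) between unfolding increasing_off_def by blast+
  then show ?thesis
    using prefix_count_increasing[of l r u k x] prefix_count_increasing[of l r w k x] l r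
      dom'[OF l(1)] dom'[OF r(1)] by (auto simp: min_def)
qed

lemma col_len_le: "col_len n lam j \<le> n"
proof -
  have "col_len n lam j \<le> card {1..n}" unfolding col_len_def by (intro card_mono) auto
  then show ?thesis by simp
qed

lemma col_len_antimono: "j \<le> j' \<Longrightarrow> col_len n lam j' \<le> col_len n lam j"
  unfolding col_len_def by (intro card_mono) auto

locale young_shape =
  fixes n :: nat and lam :: "nat \<Rightarrow> nat"
  assumes partition: "is_partition n lam"
begin

abbreviation cl :: "nat \<Rightarrow> nat" where
  "cl j \<equiv> col_len n lam j"

lemma lam_antimono: "1 \<le> i \<Longrightarrow> i \<le> i' \<Longrightarrow> i' \<le> n \<Longrightarrow> lam i' \<le> lam i"
  using partition unfolding is_partition_def by blast

lemma n_pos: "1 \<le> n"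
  using partition unfolding is_partition_def by auto

lemma lam_1_pos: "1 \<le> lam 1"
proof -
  obtain i where "i \<in> {1..n}" "lam i \<noteq> 0" using partition unfolding is_partition_def by blast
  then show ?thesis using lam_antimono[of 1 i] by simp
qed

lemma column_rows: "{i. 1 \<le> i \<and> i \<le> n \<and> j \<le> lam i} = {1..cl j}"
proof -
  have "{i. 1 \<le> i \<and> i \<le> n \<and> j \<le> lam i} = {1..<1 + cl j}"
    unfolding col_len_def
  proof (rule down_closed_eq_atLeastLessThan[where b = n])
    show "p \<in> {i. 1 \<le> i \<and> i \<le> n \<and> j \<le> lam i}"
      if "q \<in> {i. 1 \<le> i \<and> i \<le> n \<and> j \<le> lam i}" "1 \<le> p" "p \<le> q" for p q
      using that lam_antimono[of p q] by auto
  qed auto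
  then show ?thesis by (simp add: atLeastLessThanSuc_atLeastAtMost)
qed

lemma le_lam_iff:
  assumes "1 \<le> i" "i \<le> n"
  shows "j \<le> lam i \<longleftrightarrow> i \<le> cl j"
proof -
  have "j \<le> lam i \<longleftrightarrow> i \<in> {i. 1 \<le> i \<and> i \<le> n \<and> j \<le> lam i}" using assms by simp
  also have "\<dots> \<longleftrightarrow> i \<le> cl j" unfolding column_rows using assms(1) by simp
  finally show ?thesis .
qed

lemma col_len_less: "1 \<le> j \<Longrightarrow> cl j < n"
proof -
  assume "1 \<le> j"
  moreover have "lam n = 0" using partition unfolding is_partition_def by blast
  ultimately have "cl j \<noteq> n" using le_lam_iff[of n j] n_pos by auto
  then show ?thesis using col_len_le[of n lam j] by simp
qed

lemma col_len_eq_0: "lam 1 < j \<Longrightarrow> cl j = 0"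
proof -
  assume "lam 1 < j"
  then have "{i. 1 \<le> i \<and> i \<le> n \<and> j \<le> lam i} = {}" using lam_antimono[of 1] by fastforce
  then show ?thesis unfolding col_len_def by simp
qed

lemma in_shape_iff: "in_shape n lam j i \<longleftrightarrow> 1 \<le> j \<and> 1 \<le> i \<and> i \<le> cl j"
proof
  assume "in_shape n lam j i"
  then show "1 \<le> j \<and> 1 \<le> i \<and> i \<le> cl j" unfolding in_shape_def using le_lam_iff by auto
next
  assume "1 \<le> j \<and> 1 \<le> i \<and> i \<le> cl j"
  moreover then have "i \<le> n" using col_len_le[of n lam j] by simp
  ultimately show "in_shape n lam j i" unfolding in_shape_def using le_lam_iff by auto
qed

end

locale ss_tableau = young_shape +
  fixes T :: "nat \<Rightarrow> nat \<Rightarrow> nat"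
  assumes semistandard: "semistandard n lam T"
begin

lemma entry_range: "1 \<le> j \<Longrightarrow> 1 \<le> i \<Longrightarrow> i \<le> cl j \<Longrightarrow> T j i \<in> {1..n}"
  using semistandard in_shape_iff unfolding semistandard_def by auto

lemma column_strict_mono: "1 \<le> j \<Longrightarrow> strict_mono_on {1..cl j} (T j)"
proof (intro strict_mono_onI)
  assume "1 \<le> j"
  have step: "T j m < T j (Suc m)" if "m \<in> {1..<cl j}" for m
  proof -
    have "in_shape n lam j m" "in_shape n lam j (Suc m)" using that \<open>1 \<le> j\<close> in_shape_iff by auto
    then show ?thesis using semistandard unfolding semistandard_def by blast
  qed
  fix i i' assume "i \<in> {1..cl j}" "i' \<in> {1..cl j}" "i < i'"
  then show "T j i < T j i'"
    by (intro lift_Suc_mono_less_ivl[where f = "T j" and N = "{1..<cl j}", OF step]) auto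
qed

lemma column_less: "1 \<le> j \<Longrightarrow> 1 \<le> i \<Longrightarrow> i < i' \<Longrightarrow> i' \<le> cl j \<Longrightarrow> T j i < T j i'"
proof -
  assume "1 \<le> j" "1 \<le> i" "i < i'" "i' \<le> cl j"
  then show ?thesis using strict_mono_onD[OF column_strict_mono[of j], of i i'] by simp
qed

lemma row_le: "1 \<le> j \<Longrightarrow> 1 \<le> i \<Longrightarrow> i \<le> cl (Suc j) \<Longrightarrow> T j i \<le> T (Suc j) i"
proof -
  assume "1 \<le> j" "1 \<le> i" "i \<le> cl (Suc j)"
  moreover have "cl (Suc j) \<le> cl j" by (rule col_len_antimono) simp
  ultimately have "in_shape n lam j i" "in_shape n lam (Suc j) i" using in_shape_iff by auto
  then show ?thesis using semistandard unfolding semistandard_def by blast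
qed

end

section \<open>Bumping\<close>

definition bump :: "nat \<Rightarrow> nat set \<Rightarrow> nat set" where
  "bump t P = (if t \<in> P then P else insert t (P - {Max {y \<in> P. y \<le> t}}))"

fun bumps :: "(nat \<Rightarrow> nat) \<Rightarrow> nat set \<Rightarrow> nat \<Rightarrow> nat set" where
  "bumps t P 0 = P"
| "bumps t P (Suc m) = bumps t (bump (t (Suc m)) P) m"

text \<open>The witnesses \<open>a i \<le> t i\<close> make sure that every bump in \<open>bumps t P m\<close> evicts an
  element, so that bumping by a larger element commutes with insertion.\<close>
definition bump_witnesses :: "(nat \<Rightarrow> nat) \<Rightarrow> (nat \<Rightarrow> nat) \<Rightarrow> nat set \<Rightarrow> nat \<Rightarrow> bool" where
  "bump_witnesses a t P m \<longleftrightarrow> (\<forall>i\<in>{1..m}. a i \<in> P \<and> a i \<le> t i)"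

lemma finite_bump: "finite P \<Longrightarrow> finite (bump t P)"
  unfolding bump_def by auto

lemma bump_insert_greater:
  assumes "finite P" "e \<notin> P" "t < e" "y \<in> P" "y \<le> t"
  shows "bump t (insert e P) = insert e (bump t P)"
proof (cases "t \<in> P")
  case False
  have "{y \<in> insert e P. y \<le> t} = {y \<in> P. y \<le> t}" using assms(3) by auto
  moreover have "Max {y \<in> P. y \<le> t} \<in> {y \<in> P. y \<le> t}" using assms by (intro Max_in) auto
  ultimately show ?thesis unfolding bump_def using False assms(2,3) by auto
qed (simp add: bump_def)

lemma bump_keeps_smaller:
  assumes "finite P" "a \<in> P" "a \<le> t" "x \<in> P" "x < a"
  shows "x \<in> bump t P"
proof -
  have "a \<le> Max {y \<in> P. y \<le> t}" using assms(1-3) by (intro Max_ge) auto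
  then show ?thesis unfolding bump_def using assms(4,5) by auto
qed

lemma bump_witnesses_bump:
  assumes "finite P" "strict_mono_on {1..Suc m} a" "bump_witnesses a t P (Suc m)"
  shows "bump_witnesses a t (bump (t (Suc m)) P) m"
  unfolding bump_witnesses_def
proof
  fix i assume i: "i \<in> {1..m}"
  have "a i < a (Suc m)" using strict_mono_onD[OF assms(2)] i by auto
  moreover have "a (Suc m) \<in> P" "a (Suc m) \<le> t (Suc m)" "a i \<in> P" "a i \<le> t i"
    using assms(3) i unfolding bump_witnesses_def by auto
  ultimately show "a i \<in> bump (t (Suc m)) P \<and> a i \<le> t i"
    using bump_keeps_smaller[OF assms(1)] by blast
qed

lemma bumps_insert_greater:
  assumes "finite P" "e \<notin> P" "\<forall>i\<in>{1..m}. t i < e"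
    and "bump_witnesses a t P m" "strict_mono_on {1..m} a"
  shows "bumps t (insert e P) m = insert e (bumps t P m)"
  using assms
proof (induction m arbitrary: P)
  case (Suc m)
  let ?P' = "bump (t (Suc m)) P"
  have "a (Suc m) \<in> P" "a (Suc m) \<le> t (Suc m)"
    using Suc.prems(4) unfolding bump_witnesses_def by auto
  then have "bump (t (Suc m)) (insert e P) = insert e ?P'"
    using bump_insert_greater Suc.prems(1-3) by simp
  moreover have "e \<notin> ?P'" using Suc.prems(2,3) unfolding bump_def by auto
  moreover have "bump_witnesses a t ?P' m" using bump_witnesses_bump Suc.prems(1,5,4) .
  moreover have "strict_mono_on {1..m} a" using Suc.prems(5) by (rule monotone_on_subset) auto
  ultimately show ?case using Suc.IH[of ?P'] Suc.prems(3) finite_bump[OF Suc.prems(1)] by simp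
qed simp

fun bump_list :: "(nat \<Rightarrow> nat) \<Rightarrow> nat list \<Rightarrow> nat \<Rightarrow> nat list" where
  "bump_list t [] m = []"
| "bump_list t (x # xs) m =
     (if 0 < m \<and> x \<le> t m then t m # bump_list t xs (m - 1) else x # bump_list t xs m)"

lemma set_bump_list_subset: "set (bump_list t xs m) \<subseteq> set xs \<union> t ` {1..m}"
proof (induction xs arbitrary: m)
  case (Cons x xs)
  show ?case
  proof (cases "0 < m \<and> x \<le> t m")
    case True
    have "t ` {1..m - 1} \<subseteq> t ` {1..m}" "t m \<in> t ` {1..m}" using True by auto
    then show ?thesis unfolding bump_list.simps if_P[OF True] using Cons[of "m - 1"] by fastforce
  next
    case False
    then show ?thesis unfolding bump_list.simps if_not_P[OF False] using Cons[of m] by auto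
  qed
qed simp

lemma sorted_bump_list:
  assumes "sorted_wrt (>) xs" "strict_mono_on {1..m} t"
  shows "sorted_wrt (>) (bump_list t xs m)"
  using assms
proof (induction xs arbitrary: m)
  case (Cons x xs)
  show ?case
  proof (cases "0 < m \<and> x \<le> t m")
    case True
    have "strict_mono_on {1..m - 1} t" using Cons.prems(2) by (rule monotone_on_subset) auto
    moreover have "y < t m" if "y \<in> set xs \<union> t ` {1..m - 1}" for y
      using that Cons.prems True strict_mono_onD[OF Cons.prems(2)] by fastforce
    ultimately show ?thesis unfolding bump_list.simps if_P[OF True]
      using Cons set_bump_list_subset[of t xs "m - 1"] by auto
  next
    case False
    have "t i < x" if "i \<in> {1..m}" for i
      using that False strict_mono_on_less_eq[OF Cons.prems(2), of i m] by auto
    then have "y < x" if "y \<in> set xs \<union> t ` {1..m}" for y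
      using that Cons.prems(1) by auto
    then show ?thesis unfolding bump_list.simps if_not_P[OF False]
      using Cons set_bump_list_subset[of t xs m] by auto
  qed
qed simp

lemma bump_below_head:
  assumes "\<forall>y\<in>set xs. y < x" "x \<le> t"
  shows "bump t (insert x (set xs)) = insert t (set xs)"
proof (cases "t = x")
  case False
  have "Max {y \<in> insert x (set xs). y \<le> t} = x" using assms by (intro Max_eqI) auto
  then show ?thesis unfolding bump_def using assms False by auto
qed (simp add: bump_def)

lemma set_bump_list:
  assumes "sorted_wrt (>) xs" "strict_mono_on {1..m} t" "strict_mono_on {1..m} a"
    and "bump_witnesses a t (set xs) m"
  shows "set (bump_list t xs m) = bumps t (set xs) m"
  using assms
proof (induction xs arbitrary: m)
  case Nil
  then show ?case unfolding bump_witnesses_def by (cases m) auto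
next
  case (Cons x xs)
  have xs: "\<forall>y\<in>set xs. y < x" "sorted_wrt (>) xs" using Cons.prems(1) by auto
  have a_le_t: "a i \<le> t i" and a_in: "a i \<in> insert x (set xs)" if "i \<in> {1..m}" for i
    using Cons.prems(4) that unfolding bump_witnesses_def by auto
  show ?case
  proof (cases "0 < m \<and> x \<le> t m")
    case True
    then obtain m' where m: "m = Suc m'" by (cases m) auto
    have mono': "strict_mono_on {1..m'} t" "strict_mono_on {1..m'} a"
      using Cons.prems(2,3) m by (auto intro: monotone_on_subset)
    have "a m \<le> x" using a_in[of m] xs(1) m by (auto intro: less_imp_le)
    then have "a i \<in> set xs" if "i \<in> {1..m'}" for i
      using that a_in[of i] strict_mono_onD[OF Cons.prems(3), of i m] m by auto
    then have wit: "bump_witnesses a t (set xs) m'"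
      using a_le_t m unfolding bump_witnesses_def by auto
    have "t m \<notin> set xs" using xs(1) True by auto
    moreover have "\<forall>i\<in>{1..m'}. t i < t m" using strict_mono_onD[OF Cons.prems(2)] m by auto
    ultimately have "bumps t (insert (t m) (set xs)) m' = insert (t m) (bumps t (set xs) m')"
      using bumps_insert_greater[OF _ _ _ wit mono'(2)] by simp
    also have "\<dots> = set (bump_list t (x # xs) m)"
      unfolding bump_list.simps if_P[OF True] using Cons.IH[OF xs(2) mono' wit] m by simp
    finally show ?thesis
      using bump_below_head[OF xs(1), of "t m"] True m by simp
  next
    case False
    have t_less: "\<forall>i\<in>{1..m}. t i < x"
    proof
      fix i assume "i \<in> {1..m}"
      then show "t i < x" using False strict_mono_on_less_eq[OF Cons.prems(2), of i m] by auto
    qed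
    then have wit: "bump_witnesses a t (set xs) m"
      using a_le_t a_in unfolding bump_witnesses_def by (metis insertE leD order_trans)
    have "x \<notin> set xs" using xs(1) by auto
    then have "bumps t (insert x (set xs)) m = insert x (bumps t (set xs) m)"
      using bumps_insert_greater[OF _ _ t_less wit Cons.prems(3)] by simp
    then show ?thesis unfolding bump_list.simps if_not_P[OF False]
      using Cons.IH[OF xs(2) Cons.prems(2,3) wit] by simp
  qed
qed

section \<open>Scanning paths\<close>

definition scan_path_upto :: "nat \<Rightarrow> (nat \<Rightarrow> nat) \<Rightarrow> (nat \<Rightarrow> nat \<Rightarrow> nat) \<Rightarrow> nat \<Rightarrow> nat
    \<Rightarrow> (nat \<times> nat) set \<Rightarrow> nat \<Rightarrow> nat \<times> (nat \<times> nat) set" where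
  "scan_path_upto n lam T H j M i = fold (\<lambda>h st. scan_step n lam T st h) [Suc j..<Suc H] (T j i, M)"

fun scan_run :: "nat \<Rightarrow> (nat \<Rightarrow> nat) \<Rightarrow> (nat \<Rightarrow> nat \<Rightarrow> nat) \<Rightarrow> nat \<Rightarrow> nat \<Rightarrow> nat list
    \<Rightarrow> (nat \<times> nat) set \<Rightarrow> nat list \<times> (nat \<times> nat) set" where
  "scan_run n lam T H j [] M = ([], M)"
| "scan_run n lam T H j (i # is) M =
     (let (v, M') = scan_path_upto n lam T H j M i; (vs, M'') = scan_run n lam T H j is M'
      in (v # vs, M''))"

fun column_scan :: "nat \<Rightarrow> (nat \<Rightarrow> nat) \<Rightarrow> (nat \<Rightarrow> nat \<Rightarrow> nat) \<Rightarrow> nat \<Rightarrow> nat list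
    \<Rightarrow> (nat \<times> nat) set \<Rightarrow> nat list \<times> (nat \<times> nat) set" where
  "column_scan n lam T h [] M = ([], M)"
| "column_scan n lam T h (x # xs) M =
     (let (v, M') = scan_step n lam T (x, M) h; (vs, M'') = column_scan n lam T h xs M'
      in (v # vs, M''))"

definition scan_ends_upto :: "nat \<Rightarrow> (nat \<Rightarrow> nat) \<Rightarrow> (nat \<Rightarrow> nat \<Rightarrow> nat) \<Rightarrow> nat \<Rightarrow> nat \<Rightarrow> nat list" where
  "scan_ends_upto n lam T H j = rev (fst (scan_run n lam T H j (rev [1..<Suc (col_len n lam j)]) {}))"

lemma fold_scan_path_upto:
  "fold (\<lambda>i (es, M). let (v, M') = scan_path_upto n lam T H j M i in (v # es, M')) is (es0, M)
   = (rev (fst (scan_run n lam T H j is M)) @ es0, snd (scan_run n lam T H j is M))"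
proof (induction "is" arbitrary: es0 M)
  case (Cons i "is")
  obtain v M' where "scan_path_upto n lam T H j M i = (v, M')" by fastforce
  then show ?case using Cons[of "v # es0" M'] by (simp split: prod.splits)
qed simp

lemma scan_ends_eq_scan_ends_upto: "scan_ends n lam T j = scan_ends_upto n lam T (lam 1) j"
proof -
  have "scan_path n lam T j = scan_path_upto n lam T (lam 1) j"
    unfolding scan_path_def scan_path_upto_def by (intro ext) simp
  then show ?thesis unfolding scan_ends_def scan_ends_upto_def using fold_scan_path_upto by simp
qed

lemma scan_step_marks: "snd (scan_step n lam T (c, M) h) \<subseteq> M \<union> {h} \<times> UNIV"
  unfolding scan_step_def Let_def by auto

lemma scan_step_union_left:
  assumes "\<forall>r. (h, r) \<notin> M'"
  shows "scan_step n lam T (c, M \<union> M') h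
    = (fst (scan_step n lam T (c, M) h), snd (scan_step n lam T (c, M) h) \<union> M')"
proof -
  have "{r. 1 \<le> r \<and> r \<le> col_len n lam h \<and> (h, r) \<notin> M \<union> M' \<and> c \<le> T h r}
      = {r. 1 \<le> r \<and> r \<le> col_len n lam h \<and> (h, r) \<notin> M \<and> c \<le> T h r}" using assms by auto
  then show ?thesis unfolding scan_step_def Let_def fst_conv snd_conv by auto
qed

lemma scan_step_union_right:
  assumes "\<forall>r. (h, r) \<notin> M"
  shows "scan_step n lam T (c, M \<union> M') h
    = (fst (scan_step n lam T (c, M') h), M \<union> snd (scan_step n lam T (c, M') h))"
  using scan_step_union_left[OF assms, of n lam T c M'] by (simp add: Un_commute)

lemma fold_scan_step_union:
  assumes "\<forall>h\<in>set hs. \<forall>r. (h, r) \<notin> M'"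
  shows "fold (\<lambda>h st. scan_step n lam T st h) hs (c, M \<union> M')
       = (fst (fold (\<lambda>h st. scan_step n lam T st h) hs (c, M)),
          snd (fold (\<lambda>h st. scan_step n lam T st h) hs (c, M)) \<union> M')"
  using assms
proof (induction hs arbitrary: c M)
  case (Cons h hs)
  then show ?case
    using scan_step_union_left[of h M' n lam T c M]
      Cons.IH[of "fst (scan_step n lam T (c, M) h)" "snd (scan_step n lam T (c, M) h)"] by simp
qed simp

lemma fold_scan_step_marks:
  assumes "\<forall>h\<in>set hs. h \<le> H" "\<forall>p\<in>M. fst p \<le> H"
  shows "\<forall>p\<in>snd (fold (\<lambda>h st. scan_step n lam T st h) hs (c, M)). fst p \<le> H"
  using assms
proof (induction hs arbitrary: c M)
  case (Cons h hs)
  have "\<forall>p\<in>snd (scan_step n lam T (c, M) h). fst p \<le> H"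
    using scan_step_marks[of n lam T c M h] Cons.prems by auto
  then show ?case
    using Cons.IH[of "snd (scan_step n lam T (c, M) h)" "fst (scan_step n lam T (c, M) h)"] Cons.prems
    by simp
qed simp

lemma scan_path_upto_marks:
  "\<forall>p\<in>M. fst p \<le> H \<Longrightarrow> \<forall>p\<in>snd (scan_path_upto n lam T H j M i). fst p \<le> H"
  unfolding scan_path_upto_def by (rule fold_scan_step_marks) auto

lemma scan_path_upto_union:
  assumes "\<forall>p\<in>M'. H < fst p"
  shows "scan_path_upto n lam T H j (M \<union> M') i
    = (fst (scan_path_upto n lam T H j M i), snd (scan_path_upto n lam T H j M i) \<union> M')"
  unfolding scan_path_upto_def by (rule fold_scan_step_union) (use assms in force)

lemma scan_path_upto_Suc:
  assumes "j \<le> H"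
  shows "scan_path_upto n lam T (Suc H) j M i = scan_step n lam T (scan_path_upto n lam T H j M i) (Suc H)"
  using assms unfolding scan_path_upto_def by simp

text \<open>Scanning up to column \<open>Suc H\<close> is scanning up to column \<open>H\<close>, followed by one pass of
  all the path ends through column \<open>Suc H\<close>: the marks in column \<open>Suc H\<close> do not interfere
  with the earlier columns.\<close>
lemma scan_run_Suc:
  assumes "j \<le> H" and M: "\<forall>p\<in>M. fst p \<le> H" and M': "\<forall>p\<in>M'. fst p = Suc H"
  shows "scan_run n lam T (Suc H) j is (M \<union> M')
       = (fst (column_scan n lam T (Suc H) (fst (scan_run n lam T H j is M)) M'),
          snd (scan_run n lam T H j is M) \<union> snd (column_scan n lam T (Suc H) (fst (scan_run n lam T H j is M)) M'))"
  using M M'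
proof (induction "is" arbitrary: M M')
  case (Cons i "is")
  obtain v N where vN: "scan_path_upto n lam T H j M i = (v, N)" by fastforce
  obtain v' N' where vN': "scan_step n lam T (v, M') (Suc H) = (v', N')" by fastforce
  have N: "\<forall>p\<in>N. fst p \<le> H" using scan_path_upto_marks[OF Cons.prems(1), of n lam T j i] vN by simp
  have N': "\<forall>p\<in>N'. fst p = Suc H" using scan_step_marks[of n lam T v M' "Suc H"] vN' Cons.prems(2) by auto
  have "scan_path_upto n lam T (Suc H) j (M \<union> M') i = scan_step n lam T (v, N \<union> M') (Suc H)"
    using scan_path_upto_union[of M' H n lam T j M i] scan_path_upto_Suc[OF assms(1)] Cons.prems(2) vN
    by simp
  also have "\<dots> = (v', N \<union> N')"
    using scan_step_union_right[of "Suc H" N n lam T v M'] N vN' by force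
  finally show ?case using Cons.IH[OF N N'] vN vN' by (simp split: prod.splits)
qed simp

lemma column_scan_eq_bump_list:
  assumes "strict_mono_on {1..col_len n lam h} (T h)" "m \<le> col_len n lam h"
  shows "fst (column_scan n lam T h xs {(h, r) | r. m < r \<and> r \<le> col_len n lam h}) = bump_list (T h) xs m"
  using assms(2)
proof (induction xs arbitrary: m)
  case (Cons x xs)
  let ?c = "col_len n lam h"
  let ?M = "\<lambda>m. {(h, r) | r. m < r \<and> r \<le> ?c}"
  define R where "R = {r. 1 \<le> r \<and> r \<le> m \<and> x \<le> T h r}"
  have "{r. 1 \<le> r \<and> r \<le> ?c \<and> (h, r) \<notin> ?M m \<and> x \<le> T h r} = R"
    using Cons.prems unfolding R_def by auto
  then have step: "scan_step n lam T (x, ?M m) h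
      = (if R = {} then (x, ?M m) else (T h (Max R), insert (h, Max R) (?M m)))"
    unfolding scan_step_def Let_def fst_conv snd_conv by simp
  show ?case
  proof (cases "0 < m \<and> x \<le> T h m")
    case True
    have "R \<noteq> {}" "Max R = m" using True unfolding R_def by (auto intro!: Max_eqI)
    moreover have "insert (h, m) (?M m) = ?M (m - 1)" using True Cons.prems by auto
    ultimately have "scan_step n lam T (x, ?M m) h = (T h m, ?M (m - 1))" using step by simp
    then show ?thesis using Cons.IH[of "m - 1"] Cons.prems True
      by (cases "column_scan n lam T h xs (?M (m - 1))") simp
  next
    case False
    have "R = {}"
    proof (rule ccontr)
      assume "R \<noteq> {}"
      then obtain r where r: "1 \<le> r" "r \<le> m" "x \<le> T h r" unfolding R_def by auto
      have "T h r \<le> T h m" using strict_mono_on_less_eq[OF assms(1), of r m] r Cons.prems by simp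
      then show False using False r by auto
    qed
    then have "scan_step n lam T (x, ?M m) h = (x, ?M m)" using step by simp
    then show ?thesis unfolding bump_list.simps if_not_P[OF False] using Cons.IH[OF Cons.prems]
      by (cases "column_scan n lam T h xs (?M m)") simp
  qed
qed simp

lemma scan_ends_upto_self: "scan_ends_upto n lam T j j = map (T j) [1..<Suc (col_len n lam j)]"
proof -
  have "scan_run n lam T j j is M = (map (T j) is, M)" for "is" M
    by (induction "is" arbitrary: M) (auto simp: scan_path_upto_def)
  then show ?thesis unfolding scan_ends_upto_def by (simp add: rev_map)
qed

lemma scan_ends_upto_Suc:
  assumes "j \<le> H" "strict_mono_on {1..col_len n lam (Suc H)} (T (Suc H))"
  shows "scan_ends_upto n lam T (Suc H) j
    = rev (bump_list (T (Suc H)) (rev (scan_ends_upto n lam T H j)) (col_len n lam (Suc H)))"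
proof -
  let ?is = "rev [1..<Suc (col_len n lam j)]"
  have run: "scan_run n lam T (Suc H) j ?is ({} \<union> {}) =
     (fst (column_scan n lam T (Suc H) (fst (scan_run n lam T H j ?is {})) {}),
      snd (scan_run n lam T H j ?is {}) \<union> snd (column_scan n lam T (Suc H) (fst (scan_run n lam T H j ?is {})) {}))"
    by (rule scan_run_Suc[OF assms(1)]) auto
  have no_marks: "{(Suc H, r) | r. col_len n lam (Suc H) < r \<and> r \<le> col_len n lam (Suc H)} = {}"
    by auto
  have "fst (column_scan n lam T (Suc H) (fst (scan_run n lam T H j ?is {})) {})
      = bump_list (T (Suc H)) (fst (scan_run n lam T H j ?is {})) (col_len n lam (Suc H))"
    using column_scan_eq_bump_list[where T = T and h = "Suc H", OF assms(2) order_refl,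
        of "fst (scan_run n lam T H j ?is {})"] unfolding no_marks .
  then show ?thesis unfolding scan_ends_upto_def using run by simp
qed

lemma fold_fun_upd_commute:
  "h \<notin> set (map snd ps) \<Longrightarrow>
   fold (\<lambda>(a, b) f. f(b := s a)) ps (g(h := v)) = (fold (\<lambda>(a, b) f. f(b := s a)) ps g)(h := v)"
proof (induction ps arbitrary: g)
  case (Cons p ps)
  obtain a b where p: "p = (a, b)" by fastforce
  then have hb: "h \<noteq> b" "h \<notin> set (map snd ps)" using Cons.prems by auto
  let ?F = "\<lambda>(a, b) f. f(b := s a)"
  have "fold ?F (p # ps) (g(h := v)) = fold ?F ps (g(h := v, b := s a))" using p by simp
  also have "\<dots> = fold ?F ps ((g(b := s a))(h := v))" by (simp only: fun_upd_twist[OF hb(1)])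
  also have "\<dots> = (fold ?F ps (g(b := s a)))(h := v)" using hb(2) by (rule Cons.IH)
  also have "\<dots> = (fold ?F (p # ps) g)(h := v)" using p by simp
  finally show ?case .
qed simp

lemma fold_fun_upd_other:
  "q \<notin> set (map snd ps) \<Longrightarrow> fold (\<lambda>(a, b) f. f(b := s a)) ps g q = g q"
proof (induction ps arbitrary: g)
  case (Cons p ps)
  then show ?case by (cases p) auto
qed simp

lemma cyc_update_singleton: "cyc_update s [y] = s"
  unfolding cyc_update_def by simp

lemma cyc_update_Cons:
  assumes "ks \<noteq> []" "y \<notin> set ks" "hd ks \<notin> set (tl ks)"
  shows "cyc_update s (y # ks) = cyc_update s ks \<circ> transpose y (hd ks)"
proof -
  obtain h ks' where ks: "ks = h # ks'" using assms(1) by (cases ks) auto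
  let ?rest = "zip (h # ks') ks'"
  have snd_rest: "map snd ?rest = ks'" by (simp add: map_snd_zip_take)
  define U where "U = fold (\<lambda>(a, b) f. f(b := s a)) ?rest s"
  have "U y = s y" unfolding U_def using assms(2) ks snd_rest by (intro fold_fun_upd_other) simp
  moreover have "cyc_update s (y # ks) = (U(h := s y))(y := s (last ks))"
    unfolding cyc_update_def U_def using ks assms(3) snd_rest fold_fun_upd_commute[of h ?rest s s "s y"]
    by simp
  moreover have "cyc_update s ks = U(h := s (last ks))"
    unfolding cyc_update_def U_def using ks by simp
  moreover have "y \<noteq> h" using assms(2) ks by simp
  ultimately show ?thesis using ks by (auto simp: transpose_def)
qed

definition greedy_chain_spec :: "nat \<Rightarrow> (nat \<Rightarrow> nat) \<Rightarrow> nat \<Rightarrow> nat \<Rightarrow> nat \<Rightarrow> nat list \<Rightarrow> bool" where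
  "greedy_chain_spec n s c t y ks \<longleftrightarrow>
    ks \<noteq> [] \<and> hd ks = y \<and> set (tl ks) \<subseteq> {q. y < q \<and> c < q \<and> q \<le> n} \<and>
    (\<forall>q. q \<notin> set ks \<longrightarrow> cyc_update s ks q = s q) \<and> cyc_update s ks y = t \<and>
    (\<forall>q\<in>set ks. s y \<le> cyc_update s ks q) \<and> cyc_update s ks permutes {1..n} \<and>
    (\<forall>K. c \<le> K \<and> y \<le> K \<and> K \<le> n \<longrightarrow> cyc_update s ks ` {1..K} = bump t (s ` {1..K})) \<and>
    (\<forall>p. c < p \<and> Suc p \<le> n \<and> p \<noteq> y \<and> s p < s (Suc p) \<longrightarrow>
       cyc_update s ks p < cyc_update s ks (Suc p))"

lemma greedy_chain_spec_singleton:
  assumes "s permutes {1..n}" "s y = t" "1 \<le> y" "y \<le> n"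
  shows "greedy_chain_spec n s c t y [y]"
proof -
  have "t \<in> s ` {1..K}" if "y \<le> K" for K using assms that by auto
  then show ?thesis unfolding greedy_chain_spec_def cyc_update_singleton bump_def using assms by auto
qed

text \<open>The inductive step of the greedy chain: \<open>l\<close> is the next index of the chain after \<open>y\<close>,
  and \<open>ks\<close> the rest of the chain starting at \<open>l\<close>.\<close>
locale greedy_chain_step =
  fixes n :: nat and s :: "nat \<Rightarrow> nat" and c t y l :: nat and ks :: "nat list"
  assumes perm: "s permutes {1..n}"
    and y: "1 \<le> y" "y < l" "s y < t"
    and l: "c < l" "l \<le> n" "s y < s l" "s l \<le> t"
    and least: "\<And>q. c < q \<Longrightarrow> q < l \<Longrightarrow> \<not> (s y < s q \<and> s q \<le> t)"
    and outside: "\<And>q. 1 \<le> q \<Longrightarrow> q \<le> c \<Longrightarrow> q \<noteq> y \<Longrightarrow> s q < s y \<or> t < s q"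
    and t_late: "\<And>q. q < l \<Longrightarrow> s q \<noteq> t"
    and spec: "greedy_chain_spec n s c t l ks"
begin

abbreviation "D \<equiv> cyc_update s ks"

lemma chain_rest: "ks \<noteq> []" "hd ks = l" "set (tl ks) \<subseteq> {q. l < q \<and> c < q \<and> q \<le> n}"
    "\<And>q. q \<notin> set ks \<Longrightarrow> D q = s q" "D l = t" "\<And>q. q \<in> set ks \<Longrightarrow> s l \<le> D q"
    "D permutes {1..n}"
    "\<And>K. c \<le> K \<Longrightarrow> l \<le> K \<Longrightarrow> K \<le> n \<Longrightarrow> D ` {1..K} = bump t (s ` {1..K})"
    "\<And>p. c < p \<Longrightarrow> Suc p \<le> n \<Longrightarrow> p \<noteq> l \<Longrightarrow> s p < s (Suc p) \<Longrightarrow> D p < D (Suc p)"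
  using spec unfolding greedy_chain_spec_def by blast+

lemma set_ks: "q \<in> set ks \<longleftrightarrow> q = l \<or> q \<in> set (tl ks)"
  using chain_rest(1,2) by (cases ks) auto

lemma D_below: "q < l \<Longrightarrow> D q = s q"
  using chain_rest(3,4) set_ks by force

lemma D_y: "D y = s y"
  using D_below y by simp

lemma cyc_update_y_Cons: "cyc_update s (y # ks) = D \<circ> transpose y l"
proof -
  have "y \<notin> set ks" "hd ks \<notin> set (tl ks)" using chain_rest(2,3) set_ks y by auto
  then show ?thesis using cyc_update_Cons[OF chain_rest(1)] chain_rest(2) by simp
qed

lemma Max_prefix_le_t: "Max {z \<in> s ` {1..K}. z \<le> t} = s y" if "y \<le> K" "K < l"
proof (rule Max_eqI)
  show "s y \<in> {z \<in> s ` {1..K}. z \<le> t}" using y that by auto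
  fix z assume "z \<in> {z \<in> s ` {1..K}. z \<le> t}"
  then obtain q where q: "q \<in> {1..K}" "z = s q" "s q \<le> t" by auto
  show "z \<le> s y"
  proof (cases "q \<le> c")
    case True
    then show ?thesis using outside[of q] q by (cases "q = y") auto
  next
    case False
    then show ?thesis using least[of q] q that by auto
  qed
qed simp

lemma image_prefix:
  assumes "c \<le> K" "y \<le> K" "K \<le> n"
  shows "cyc_update s (y # ks) ` {1..K} = bump t (s ` {1..K})"
proof (cases "l \<le> K")
  case True
  have "transpose y l permutes {1..K}" using y True by (intro permutes_swap_id) auto
  then show ?thesis using chain_rest(8)[OF assms(1) True assms(3)]
    unfolding cyc_update_y_Cons image_comp[symmetric] by (simp add: permutes_image)
next
  case False
  have "transpose y l ` {1..K} = insert l ({1..K} - {y})"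
    using False y assms(2) by (auto simp: transpose_def image_iff)
  moreover have "D ` ({1..K} - {y}) = s ` ({1..K} - {y})"
    using D_below False by (intro image_cong) auto
  moreover have "s ` ({1..K} - {y}) = s ` {1..K} - {s y}"
    using permutes_inj[OF perm] by (simp add: image_set_diff)
  moreover have "t \<notin> s ` {1..K}"
  proof
    assume "t \<in> s ` {1..K}"
    then obtain q where "q \<in> {1..K}" "s q = t" by auto
    then show False using t_late[of q] False by simp
  qed
  ultimately show ?thesis unfolding cyc_update_y_Cons image_comp[symmetric] bump_def
    using chain_rest(5) Max_prefix_le_t[OF assms(2)] False by simp
qed

lemma ascent:
  assumes p: "c < p" "Suc p \<le> n" "p \<noteq> y" "s p < s (Suc p)"
  shows "cyc_update s (y # ks) p < cyc_update s (y # ks) (Suc p)"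
proof -
  have D': "cyc_update s (y # ks) q = D (transpose y l q)" for q
    unfolding cyc_update_y_Cons by simp
  consider "p = l" | "Suc p = l" | "Suc p = y" | "p \<noteq> l" "Suc p \<noteq> l" "Suc p \<noteq> y"
    by blast
  then show ?thesis
  proof cases
    case 1
    have "s y < D (Suc l)"
    proof (cases "Suc l \<in> set ks")
      case True
      then show ?thesis using chain_rest(6) l by force
    next
      case False
      then show ?thesis using chain_rest(4) p 1 l by simp
    qed
    then show ?thesis unfolding D' using 1 D_y y by (simp add: transpose_def)
  next
    case 2
    then have "s p \<le> t" "s p \<noteq> s y" using p l permutes_inj[OF perm] by (auto dest: injD)
    then have "s p < s y" using least[of p] p 2 by auto
    then show ?thesis unfolding D' using 2 p D_below[of p] D_y by (simp add: transpose_def)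
  next
    case 3
    then show ?thesis unfolding D' using p D_below[of p] chain_rest(5) y by (simp add: transpose_def)
  next
    case 4
    then show ?thesis unfolding D' using chain_rest(9) p by (simp add: transpose_def)
  qed
qed

lemma spec_Cons: "greedy_chain_spec n s c t y (y # ks)"
proof -
  have "set ks \<subseteq> {q. y < q \<and> c < q \<and> q \<le> n}" using chain_rest(3) set_ks y l by auto
  moreover have "cyc_update s (y # ks) q = s q" if "q \<notin> set (y # ks)" for q
    using that chain_rest(4) set_ks unfolding cyc_update_y_Cons by (auto simp: transpose_def)
  moreover have "cyc_update s (y # ks) y = t" unfolding cyc_update_y_Cons using chain_rest(5) by simp
  moreover have "s y \<le> cyc_update s (y # ks) q" if "q \<in> set (y # ks)" for q
    using that chain_rest(5,6) D_y y l unfolding cyc_update_y_Cons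
    by (cases "q = y"; cases "q = l") (auto simp: transpose_def intro: order_trans less_imp_le)
  moreover have "cyc_update s (y # ks) permutes {1..n}"
    unfolding cyc_update_y_Cons using y l by (intro permutes_compose chain_rest(7) permutes_swap_id) auto
  ultimately show ?thesis unfolding greedy_chain_spec_def using image_prefix ascent by simp
qed

end

lemma greedy_chain_stop: "s y = t \<Longrightarrow> greedy_chain n s c t y f = [y]"
  by (cases f) auto

text \<open>The chain is built from positions beyond \<open>c\<close> whose values climb from \<open>s y\<close> up to \<open>t\<close>;
  the fuel \<open>f\<close> suffices as soon as it bounds the number of such candidate positions.\<close>
lemma greedy_chain_spec_greedy_chain:
  assumes perm: "s permutes {1..n}" and qt: "c < qt" "qt \<le> n" "s qt = t"
  shows "1 \<le> y \<Longrightarrow> y \<le> n \<Longrightarrow> s y \<le> t \<Longrightarrow> (c < y \<Longrightarrow> y \<le> qt)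
    \<Longrightarrow> (\<And>q. c < q \<Longrightarrow> q < y \<Longrightarrow> \<not> (s y < s q \<and> s q \<le> t))
    \<Longrightarrow> (\<And>q. 1 \<le> q \<Longrightarrow> q \<le> c \<Longrightarrow> q \<noteq> y \<Longrightarrow> s q < s y \<or> t < s q)
    \<Longrightarrow> card {q. c < q \<and> q \<le> n \<and> s y < s q \<and> s q \<le> t} \<le> f
    \<Longrightarrow> greedy_chain_spec n s c t y (greedy_chain n s c t y f)"
proof (induction f arbitrary: y)
  case 0
  then have "s y = t"
    using qt card_gt_0_iff[of "{q. c < q \<and> q \<le> n \<and> s y < s q \<and> s q \<le> t}"] by force
  then show ?case using greedy_chain_spec_singleton[OF perm] greedy_chain_stop 0 by metis
next
  case (Suc f)
  show ?case
  proof (cases "s y = t")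
    case True
    then show ?thesis using greedy_chain_spec_singleton[OF perm] greedy_chain_stop Suc.prems by metis
  next
    case False
    define cand where "cand y' = {q. c < q \<and> q \<le> n \<and> s y' < s q \<and> s q \<le> t}" for y'
    define l where "l = (LEAST q. q \<in> cand y)"
    have "qt \<in> cand y" unfolding cand_def using qt False Suc.prems(3) by auto
    then have l: "l \<in> cand y" "l \<le> qt" unfolding l_def by (auto intro: LeastI Least_le)
    have least: "\<not> (s y < s q \<and> s q \<le> t)" if "c < q" "q < l" for q
      using not_less_Least[of q "\<lambda>q. q \<in> cand y"] that l unfolding l_def cand_def by auto
    have "l \<noteq> y" "c < l" using l unfolding cand_def by auto
    moreover have "\<not> l < y" if "c < y" using l Suc.prems(5)[of l] \<open>c < l\<close> unfolding cand_def by auto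
    ultimately have "y < l" by linarith
    have "cand l \<subset> cand y" using l unfolding cand_def by auto
    moreover have "finite (cand y)" unfolding cand_def by simp
    ultimately have "card (cand l) < card (cand y)" by (simp add: psubset_card_mono)
    then have fuel: "card (cand l) \<le> f" using Suc.prems(7) unfolding cand_def by simp
    have outside_l: "s q < s l \<or> t < s q" if "1 \<le> q" "q \<le> c" "q \<noteq> l" for q
      using Suc.prems(6)[of q] that l unfolding cand_def by (cases "q = y") auto
    have spec: "greedy_chain_spec n s c t l (greedy_chain n s c t l f)"
      using Suc.IH[of l] l least outside_l fuel unfolding cand_def by auto
    have "s q \<noteq> t" if "q < l" for q
      using that l permutes_inj[OF perm] qt by (metis injD leD)
    then interpret greedy_chain_step n s c t y l "greedy_chain n s c t l f"
      using perm Suc.prems(1,3,6) False \<open>y < l\<close> l least spec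
      by unfold_locales (auto simp: cand_def)
    have "greedy_chain n s c t y (Suc f) = y # greedy_chain n s c t l f"
      using False unfolding l_def cand_def by simp
    then show ?thesis using spec_Cons by simp
  qed
qed

section \<open>The invariant of the greedy procedure\<close>

definition col_lengths_upto :: "nat \<Rightarrow> (nat \<Rightarrow> nat) \<Rightarrow> nat \<Rightarrow> nat set" where
  "col_lengths_upto n lam H = {col_len n lam h | h. 1 \<le> h \<and> h \<le> H}"

definition greedy_column :: "nat \<Rightarrow> (nat \<Rightarrow> nat) \<Rightarrow> (nat \<Rightarrow> nat \<Rightarrow> nat) \<Rightarrow> nat \<Rightarrow> (nat \<Rightarrow> nat) \<Rightarrow> nat \<Rightarrow> nat" where
  "greedy_column n lam T H s = fold (\<lambda>i s. greedy_step n lam T s (H, i)) (rev [1..<Suc (col_len n lam H)]) s"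

lemma fold_concat: "fold f (concat xss) s = fold (\<lambda>xs. fold f xs) xss s"
  by (induction xss arbitrary: s) auto

context ss_tableau
begin

text \<open>While column \<open>Suc H\<close> is processed from the bottom row up to row \<open>i + 1\<close>, the rows above
  still carry column \<open>H\<close>; bumping a prefix set by the remaining entries of column \<open>Suc H\<close>
  gives the same result as bumping the initial prefix set by the whole column.\<close>
definition row_invariant :: "nat \<Rightarrow> (nat \<Rightarrow> nat) \<Rightarrow> nat \<Rightarrow> (nat \<Rightarrow> nat) \<Rightarrow> bool" where
  "row_invariant H s0 i s \<longleftrightarrow> s permutes {1..n} \<and>
     (\<forall>q. 1 \<le> q \<and> q \<le> i \<longrightarrow> s q = T H q) \<and>
     (\<forall>q. i < q \<and> q \<le> cl (Suc H) \<longrightarrow> s q = T (Suc H) q) \<and>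
     (\<forall>p. cl (Suc H) < p \<and> Suc p \<le> n \<and> p \<notin> col_lengths_upto n lam H \<longrightarrow> s p < s (Suc p)) \<and>
     (\<forall>h. 1 \<le> h \<and> h \<le> H \<longrightarrow>
        bumps (T (Suc H)) (s ` {1..cl h}) i = bumps (T (Suc H)) (s0 ` {1..cl h}) (cl (Suc H)))"

lemma row_invariant_target_beyond:
  assumes J: "row_invariant H s0 i s" and "1 \<le> H" "1 \<le> i" "i \<le> cl (Suc H)"
    and less: "T H i < T (Suc H) i" and q: "1 \<le> q" "s q = T (Suc H) i"
  shows "cl (Suc H) < q"
proof (rule ccontr)
  assume "\<not> cl (Suc H) < q"
  then have q_le: "q \<le> cl (Suc H)" by simp
  have "cl (Suc H) \<le> cl H" by (rule col_len_antimono) simp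
  show False
  proof (cases "q \<le> i")
    case True
    then have "s q = T H q" using J q unfolding row_invariant_def by blast
    moreover have "T H q \<le> T H i"
      using column_less[OF assms(2), of q i] True q assms(4) \<open>cl (Suc H) \<le> cl H\<close> by (cases "q = i") auto
    ultimately show False using q less by simp
  next
    case False
    then have "s q = T (Suc H) q" using J q_le unfolding row_invariant_def by simp
    moreover have "T (Suc H) i < T (Suc H) q" using column_less[of "Suc H" i q] assms(3) False q_le by simp
    ultimately show False using q by simp
  qed
qed

lemma row_invariant_outside_interval:
  assumes J: "row_invariant H s0 i s" and "1 \<le> H" "1 \<le> i" "i \<le> cl (Suc H)"
    and q: "1 \<le> q" "q \<le> cl (Suc H)" "q \<noteq> i"
  shows "s q < s i \<or> T (Suc H) i < s q"
proof (cases "q < i")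
  case True
  have "cl (Suc H) \<le> cl H" by (rule col_len_antimono) simp
  then have "T H q < T H i" using column_less[OF assms(2), of q i] True q assms(4) by simp
  moreover have "s q = T H q" "s i = T H i" using J True q assms(3) unfolding row_invariant_def by auto
  ultimately show ?thesis by simp
next
  case False
  then have "T (Suc H) i < T (Suc H) q" using column_less[of "Suc H" i q] q assms(3) by simp
  moreover have "s q = T (Suc H) q" using J False q unfolding row_invariant_def by auto
  ultimately show ?thesis by simp
qed

lemma greedy_chain_spec_row:
  assumes J: "row_invariant H s0 i s" and "1 \<le> H" "1 \<le> i" "i \<le> cl (Suc H)"
    and less: "T H i < T (Suc H) i"
  shows "greedy_chain_spec n s (cl (Suc H)) (T (Suc H) i) i
           (greedy_chain n s (cl (Suc H)) (T (Suc H) i) i n)"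
proof -
  let ?c = "cl (Suc H)" and ?t = "T (Suc H) i"
  have perm: "s permutes {1..n}" and si: "s i = T H i"
    using J assms(3) unfolding row_invariant_def by auto
  have "?c < n" by (rule col_len_less) simp
  have "?t \<in> s ` {1..n}" using entry_range[of "Suc H" i] assms(3,4) permutes_image[OF perm] by simp
  then obtain qt where qt: "qt \<in> {1..n}" "s qt = ?t" by (metis imageE)
  then have "?c < qt" using row_invariant_target_beyond[OF assms] by simp
  then show ?thesis
  proof (rule greedy_chain_spec_greedy_chain[OF perm _ _ qt(2)])
    show "qt \<le> n" "1 \<le> i" "i \<le> n" "s i \<le> ?t" using qt assms(3,4) \<open>?c < n\<close> si less by auto
    show "i \<le> qt" if "?c < i" using that assms(4) by simp
    show "\<not> (s i < s q \<and> s q \<le> ?t)" if "?c < q" "q < i" for q using that assms(4) by simp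
    show "s q < s i \<or> ?t < s q" if "1 \<le> q" "q \<le> ?c" "q \<noteq> i" for q
      using row_invariant_outside_interval[OF assms(1-4) that] .
    have "card {q. ?c < q \<and> q \<le> n \<and> s i < s q \<and> s q \<le> ?t} \<le> card {1..n}"
      using \<open>?c < n\<close> by (intro card_mono) auto
    then show "card {q. ?c < q \<and> q \<le> n \<and> s i < s q \<and> s q \<le> ?t} \<le> n" by simp
  qed
qed

lemma greedy_step_row:
  assumes J: "row_invariant H s0 i s" and "1 \<le> H" "1 \<le> i" "i \<le> cl (Suc H)"
  defines "s' \<equiv> greedy_step n lam T s (Suc H, i)"
  shows "s' permutes {1..n}"
    and "\<And>q. q \<le> cl (Suc H) \<Longrightarrow> q \<noteq> i \<Longrightarrow> s' q = s q"
    and "s' i = T (Suc H) i"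
    and "\<And>p. cl (Suc H) < p \<Longrightarrow> Suc p \<le> n \<Longrightarrow> s p < s (Suc p) \<Longrightarrow> s' p < s' (Suc p)"
    and "\<And>K. cl (Suc H) \<le> K \<Longrightarrow> i \<le> K \<Longrightarrow> K \<le> n \<Longrightarrow> s' ` {1..K} = bump (T (Suc H) i) (s ` {1..K})"
proof -
  let ?c = "cl (Suc H)" and ?t = "T (Suc H) i"
  have perm: "s permutes {1..n}" and si: "s i = T H i"
    using J assms(3) unfolding row_invariant_def by auto
  have "T H i \<le> ?t" using row_le[OF assms(2-4)] .
  then consider "T H i = ?t" | "T H i < ?t" by linarith
  then have "s' permutes {1..n} \<and> (\<forall>q. q \<le> ?c \<and> q \<noteq> i \<longrightarrow> s' q = s q) \<and> s' i = ?t \<and>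
      (\<forall>p. ?c < p \<and> Suc p \<le> n \<and> s p < s (Suc p) \<longrightarrow> s' p < s' (Suc p)) \<and>
      (\<forall>K. ?c \<le> K \<and> i \<le> K \<and> K \<le> n \<longrightarrow> s' ` {1..K} = bump ?t (s ` {1..K}))"
  proof cases
    case 1
    then have "s' = s" unfolding s'_def greedy_step_def by simp
    moreover have "?t \<in> s ` {1..K}" if "i \<le> K" for K
      using si 1 assms(3) that by (intro image_eqI[of _ _ i]) auto
    ultimately show ?thesis using perm si 1 unfolding bump_def by simp
  next
    case 2
    then have "s' = cyc_update s (greedy_chain n s ?c ?t i n)"
      unfolding s'_def greedy_step_def by simp
    moreover have "greedy_chain_spec n s ?c ?t i (greedy_chain n s ?c ?t i n)"
      using greedy_chain_spec_row[OF J assms(2-4) 2] .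
    moreover have "q \<notin> set ks" if "ks \<noteq> []" "hd ks = i"
      "set (tl ks) \<subseteq> {q. i < q \<and> ?c < q \<and> q \<le> n}" "q \<le> ?c" "q \<noteq> i" for q ks
      using that by (cases ks) auto
    ultimately show ?thesis unfolding greedy_chain_spec_def using assms(4) by auto
  qed
  then show "s' permutes {1..n}"
    and "\<And>q. q \<le> ?c \<Longrightarrow> q \<noteq> i \<Longrightarrow> s' q = s q"
    and "s' i = ?t"
    and "\<And>p. ?c < p \<Longrightarrow> Suc p \<le> n \<Longrightarrow> s p < s (Suc p) \<Longrightarrow> s' p < s' (Suc p)"
    and "\<And>K. ?c \<le> K \<Longrightarrow> i \<le> K \<Longrightarrow> K \<le> n \<Longrightarrow> s' ` {1..K} = bump ?t (s ` {1..K})"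
    by blast+
qed


lemma row_invariant_step:
  assumes J: "row_invariant H s0 i s" and "1 \<le> H" "1 \<le> i" "i \<le> cl (Suc H)"
  shows "row_invariant H s0 (i - 1) (greedy_step n lam T s (Suc H, i))"
proof -
  let ?s' = "greedy_step n lam T s (Suc H, i)" and ?t = "T (Suc H)"
  note s' = greedy_step_row[OF assms]
  have above: "s q = T H q" if "1 \<le> q" "q \<le> i" for q
    using J that unfolding row_invariant_def by blast
  have below: "s q = T (Suc H) q" if "i < q" "q \<le> cl (Suc H)" for q
    using J that unfolding row_invariant_def by blast
  show ?thesis unfolding row_invariant_def
  proof (intro conjI allI impI)
    show "?s' permutes {1..n}" using s'(1) .
    show "?s' q = T H q" if "1 \<le> q \<and> q \<le> i - 1" for q
    proof -
      have "q < i" "q \<le> cl (Suc H)" using that assms(3,4) by auto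
      then show ?thesis using s'(2)[of q] above[of q] that by simp
    qed
    show "?s' q = T (Suc H) q" if "i - 1 < q \<and> q \<le> cl (Suc H)" for q
    proof (cases "q = i")
      case False
      then have "i < q" using that by arith
      then show ?thesis using s'(2)[of q] below[of q] that by simp
    qed (use s'(3) in simp)
    show "?s' p < ?s' (Suc p)"
      if "cl (Suc H) < p \<and> Suc p \<le> n \<and> p \<notin> col_lengths_upto n lam H" for p
    proof -
      have "s p < s (Suc p)" using that J unfolding row_invariant_def by blast
      then show ?thesis using that s'(4) by simp
    qed
    show "bumps ?t (?s' ` {1..cl h}) (i - 1) = bumps ?t (s0 ` {1..cl h}) (cl (Suc H))"
      if "1 \<le> h \<and> h \<le> H" for h
    proof -
      have "cl (Suc H) \<le> cl h" "cl h \<le> n"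
        using that col_len_antimono[of h "Suc H" n lam] col_len_le[of n lam h] by simp_all
      then have "?s' ` {1..cl h} = bump (?t i) (s ` {1..cl h})"
        using s'(5)[of "cl h"] assms(4) by linarith
      moreover obtain i' where "i = Suc i'" using assms(3) by (cases i) auto
      ultimately have "bumps ?t (?s' ` {1..cl h}) (i - 1) = bumps ?t (s ` {1..cl h}) i" by simp
      then show ?thesis using J that unfolding row_invariant_def by simp
    qed
  qed
qed

lemma row_invariant_fold:
  assumes "1 \<le> H"
  shows "i \<le> cl (Suc H) \<Longrightarrow> row_invariant H s0 i s \<Longrightarrow>
    row_invariant H s0 0 (fold (\<lambda>i s. greedy_step n lam T s (Suc H, i)) (rev [1..<Suc i]) s)"
proof (induction i arbitrary: s)
  case (Suc i)
  then show ?case using row_invariant_step[OF Suc.prems(2) assms] by simp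
qed simp

definition column_invariant :: "nat \<Rightarrow> (nat \<Rightarrow> nat) \<Rightarrow> bool" where
  "column_invariant H s \<longleftrightarrow> s permutes {1..n} \<and>
     (\<forall>q. 1 \<le> q \<and> q \<le> cl H \<longrightarrow> s q = T H q) \<and>
     increasing_off n (col_lengths_upto n lam H) s \<and>
     (\<forall>h. 1 \<le> h \<and> h \<le> H \<longrightarrow> s ` {1..cl h} = set (scan_ends_upto n lam T H h)
        \<and> sorted_wrt (<) (scan_ends_upto n lam T H h))"

lemma sorted_scan_ends_upto_self: "1 \<le> j \<Longrightarrow> sorted_wrt (<) (scan_ends_upto n lam T j j)"
  unfolding scan_ends_upto_self sorted_wrt_map
  by (rule sorted_wrt_mono_rel[OF _ sorted_wrt_upt]) (auto intro: column_less)

lemma row_invariant_start: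
  assumes "column_invariant H s0" "1 \<le> H"
  shows "row_invariant H s0 (cl (Suc H)) s0"
proof -
  have "cl (Suc H) \<le> cl H" by (rule col_len_antimono) simp
  moreover have "cl H \<in> col_lengths_upto n lam H" unfolding col_lengths_upto_def using assms(2) by blast
  ultimately show ?thesis using assms(1) unfolding column_invariant_def row_invariant_def increasing_off_def
    by auto
qed

lemma scan_ends_upto_Suc_eq_bumps:
  assumes I: "column_invariant H s0" and H: "1 \<le> H" and h: "1 \<le> h" "h \<le> H"
  shows "set (scan_ends_upto n lam T (Suc H) h) = bumps (T (Suc H)) (s0 ` {1..cl h}) (cl (Suc H))"
    and "sorted_wrt (<) (scan_ends_upto n lam T (Suc H) h)"
proof -
  let ?c = "cl (Suc H)" and ?ends = "scan_ends_upto n lam T H h"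
  have ends: "s0 ` {1..cl h} = set ?ends" "sorted_wrt (<) ?ends"
    using I h unfolding column_invariant_def by auto
  have c_le: "?c \<le> cl H" "?c \<le> cl h"
    using col_len_antimono[of H "Suc H" n lam] col_len_antimono[of h "Suc H" n lam] h by simp_all
  have mono: "strict_mono_on {1..?c} (T (Suc H))" "strict_mono_on {1..?c} (T H)"
    using column_strict_mono[of "Suc H"] column_strict_mono[OF H] c_le(1)
    by (auto intro: monotone_on_subset)
  have "bump_witnesses (T H) (T (Suc H)) (set (rev ?ends)) ?c"
    unfolding bump_witnesses_def
  proof
    fix i assume i: "i \<in> {1..?c}"
    have "s0 i = T H i" using I i c_le(1) unfolding column_invariant_def by auto
    then have "T H i \<in> s0 ` {1..cl h}" using i c_le(2) by (metis atLeastAtMost_iff image_eqI order_trans)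
    then show "T H i \<in> set (rev ?ends) \<and> T H i \<le> T (Suc H) i"
      using ends row_le[OF H, of i] i by auto
  qed
  then show "set (scan_ends_upto n lam T (Suc H) h) = bumps (T (Suc H)) (s0 ` {1..cl h}) ?c"
    using set_bump_list[of "rev ?ends", OF _ mono] ends scan_ends_upto_Suc[where T = T, OF h(2) mono(1)]
    by (simp add: sorted_wrt_rev)
  show "sorted_wrt (<) (scan_ends_upto n lam T (Suc H) h)"
    using sorted_bump_list[of "rev ?ends", OF _ mono(1)] ends scan_ends_upto_Suc[where T = T, OF h(2) mono(1)]
    by (simp add: sorted_wrt_rev)
qed

lemma column_invariant_step:
  assumes I: "column_invariant H s0" and H: "1 \<le> H"
  shows "column_invariant (Suc H) (greedy_column n lam T (Suc H) s0)"
proof -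
  let ?c = "cl (Suc H)" and ?s = "greedy_column n lam T (Suc H) s0"
  have "row_invariant H s0 0 ?s"
    unfolding greedy_column_def using row_invariant_fold[OF H order_refl row_invariant_start[OF I H]] .
  then have perm: "?s permutes {1..n}" and col: "\<And>q. 1 \<le> q \<Longrightarrow> q \<le> ?c \<Longrightarrow> ?s q = T (Suc H) q"
    and asc: "\<And>p. ?c < p \<Longrightarrow> Suc p \<le> n \<Longrightarrow> p \<notin> col_lengths_upto n lam H \<Longrightarrow> ?s p < ?s (Suc p)"
    and bumped: "\<And>h. 1 \<le> h \<Longrightarrow> h \<le> H \<Longrightarrow> ?s ` {1..cl h} = bumps (T (Suc H)) (s0 ` {1..cl h}) ?c"
    unfolding row_invariant_def by auto
  have "increasing_off n (col_lengths_upto n lam (Suc H)) ?s"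
    unfolding increasing_off_def col_lengths_upto_def
  proof (intro allI impI)
    fix p assume p: "1 \<le> p \<and> p < n \<and> p \<notin> {cl h |h. 1 \<le> h \<and> h \<le> Suc H}"
    show "?s p < ?s (Suc p)"
    proof (cases "?c < p")
      case True
      then show ?thesis using asc p unfolding col_lengths_upto_def by force
    next
      case False
      then have "Suc p \<le> ?c" using p by (cases "p = ?c") auto
      then show ?thesis using col p column_less[of "Suc H" p "Suc p"] by simp
    qed
  qed
  moreover have "?s ` {1..cl h} = set (scan_ends_upto n lam T (Suc H) h)
      \<and> sorted_wrt (<) (scan_ends_upto n lam T (Suc H) h)" if h: "1 \<le> h" "h \<le> Suc H" for h
  proof (cases "h = Suc H")
    case True
    have "?s ` {1..?c} = T (Suc H) ` {1..?c}" using col by auto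
    then show ?thesis using True sorted_scan_ends_upto_self[of "Suc H"]
      by (simp add: scan_ends_upto_self atLeastLessThanSuc_atLeastAtMost del: upt_Suc)
  next
    case False
    then show ?thesis using scan_ends_upto_Suc_eq_bumps[OF I H h(1)] bumped[OF h(1)] h by simp
  qed
  ultimately show ?thesis unfolding column_invariant_def using perm col by auto
qed


definition first_column_completion :: "nat list" where
  "first_column_completion =
     map (T 1) [1..<Suc (cl 1)] @ sorted_list_of_set ({1..n} - T 1 ` {1..cl 1})"

lemma pi_init_eq_nth:
  "p \<in> {1..n} \<Longrightarrow> pi_init n lam T p = first_column_completion ! (p - 1)"
  unfolding pi_init_def first_column_completion_def Let_def
  by (cases "p \<le> cl 1") (auto simp: nth_append diff_diff_add simp del: upt_Suc)

lemma distinct_first_column_completion: "distinct first_column_completion"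
proof -
  have "inj_on (T 1) {1..cl 1}" by (rule strict_mono_on_imp_inj_on[OF column_strict_mono]) simp
  then have "distinct (map (T 1) [1..<Suc (cl 1)])"
    by (simp only: distinct_map distinct_upt set_upt atLeastLessThanSuc_atLeastAtMost simp_thms)
  moreover have "set (map (T 1) [1..<Suc (cl 1)]) = T 1 ` {1..cl 1}"
    by (simp only: set_map set_upt atLeastLessThanSuc_atLeastAtMost)
  ultimately show ?thesis unfolding first_column_completion_def distinct_append by simp
qed

lemma set_first_column_completion: "set first_column_completion = {1..n}"
proof -
  have "set (map (T 1) [1..<Suc (cl 1)]) = T 1 ` {1..cl 1}"
    by (simp only: set_map set_upt atLeastLessThanSuc_atLeastAtMost)
  moreover have "T 1 ` {1..cl 1} \<subseteq> {1..n}" using entry_range[of 1] by auto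
  ultimately show ?thesis unfolding first_column_completion_def set_append by auto
qed

lemma length_first_column_completion: "length first_column_completion = n"
  using distinct_card[OF distinct_first_column_completion] set_first_column_completion by simp

lemma pi_init_permutes: "pi_init n lam T permutes {1..n}"
proof (rule bij_imp_permutes)
  have "bij_betw (\<lambda>p. p - 1) {1..n} {..<n}"
    by (rule bij_betw_byWitness[where f' = Suc]) auto
  moreover have "bij_betw ((!) first_column_completion) {..<n} {1..n}"
    using bij_betw_nth[OF distinct_first_column_completion] set_first_column_completion
      length_first_column_completion
    by (simp add: lessThan_atLeast0)
  ultimately have "bij_betw (\<lambda>p. first_column_completion ! (p - 1)) {1..n} {1..n}"
    using bij_betw_trans unfolding comp_def by blast
  then show "bij_betw (pi_init n lam T) {1..n} {1..n}"
    by (rule bij_betw_cong[THEN iffD2, rotated]) (simp add: pi_init_eq_nth)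
  show "pi_init n lam T x = x" if "x \<notin> {1..n}" for x
    using that unfolding pi_init_def by auto
qed

lemma pi_init_first_column: "1 \<le> q \<Longrightarrow> q \<le> cl 1 \<Longrightarrow> pi_init n lam T q = T 1 q"
  using col_len_less[of 1] unfolding pi_init_def by simp

lemma increasing_off_pi_init: "increasing_off n (col_lengths_upto n lam 1) (pi_init n lam T)"
  unfolding increasing_off_def col_lengths_upto_def
proof (intro allI impI)
  let ?rest = "sorted_list_of_set ({1..n} - T 1 ` {1..cl 1})"
  fix p assume p: "1 \<le> p \<and> p < n \<and> p \<notin> {cl h |h. 1 \<le> h \<and> h \<le> 1}"
  then have "p \<noteq> cl 1" by auto
  show "pi_init n lam T p < pi_init n lam T (Suc p)"
  proof (cases "p < cl 1")
    case True
    then show ?thesis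
      using pi_init_first_column[of p] pi_init_first_column[of "Suc p"] column_less[of 1 p "Suc p"] p
      by simp
  next
    case False
    have "length ?rest = n - cl 1"
      using length_first_column_completion unfolding first_column_completion_def by (simp del: upt_Suc)
    then have "Suc p - cl 1 - 1 < length ?rest" using p False by linarith
    then have "?rest ! (p - cl 1 - 1) < ?rest ! (Suc p - cl 1 - 1)"
      using False \<open>p \<noteq> cl 1\<close> by (intro sorted_wrt_nth_less[of "(<)"]) auto
    moreover have "pi_init n lam T p = ?rest ! (p - cl 1 - 1)"
      "pi_init n lam T (Suc p) = ?rest ! (Suc p - cl 1 - 1)"
      using False p \<open>p \<noteq> cl 1\<close> by (simp_all add: pi_init_def Let_def)
    ultimately show ?thesis by simp
  qed
qed

lemma column_invariant_init: "column_invariant 1 (pi_init n lam T)"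
proof -
  have "set (scan_ends_upto n lam T 1 1) = T 1 ` {1..cl 1}"
    by (simp add: scan_ends_upto_self atLeastLessThanSuc_atLeastAtMost del: upt_Suc)
  moreover have "pi_init n lam T ` {1..cl 1} = T 1 ` {1..cl 1}"
    using pi_init_first_column by (intro image_cong) auto
  moreover have "sorted_wrt (<) (scan_ends_upto n lam T 1 1)" by (rule sorted_scan_ends_upto_self) simp
  ultimately have "pi_init n lam T ` {1..cl 1} = set (scan_ends_upto n lam T 1 1)
      \<and> sorted_wrt (<) (scan_ends_upto n lam T 1 1)" by simp
  then have "\<forall>h. 1 \<le> h \<and> h \<le> 1 \<longrightarrow> pi_init n lam T ` {1..cl h} = set (scan_ends_upto n lam T 1 h)
      \<and> sorted_wrt (<) (scan_ends_upto n lam T 1 h)"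
    by (metis le_antisym)
  then show ?thesis
    unfolding column_invariant_def using pi_init_permutes pi_init_first_column increasing_off_pi_init
    by blast
qed

lemma pi_T_eq_fold_greedy_column:
  "pi_T n lam T = fold (greedy_column n lam T) [2..<Suc (lam 1)] (pi_init n lam T)"
proof -
  let ?g = "\<lambda>loc pi. greedy_step n lam T pi loc"
  let ?F = "\<lambda>j. map (\<lambda>i. (j, i)) (rev [1..<Suc (cl j)])"
  have F: "(\<lambda>xs. fold ?g xs) \<circ> ?F = greedy_column n lam T"
    by (intro ext) (simp add: greedy_column_def fold_map comp_def)
  have "pi_T n lam T = fold (\<lambda>xs. fold ?g xs) (map ?F [2..<Suc (lam 1)]) (pi_init n lam T)"
    unfolding pi_T_def greedy_locs_def fold_concat ..
  also have "\<dots> = fold (greedy_column n lam T) [2..<Suc (lam 1)] (pi_init n lam T)"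
    unfolding fold_map F ..
  finally show ?thesis .
qed

lemma column_invariant_pi_T: "column_invariant (lam 1) (pi_T n lam T)"
proof -
  have "column_invariant H (fold (greedy_column n lam T) [2..<Suc H] (pi_init n lam T))"
    if "1 \<le> H" for H
    using that
  proof (induction H rule: dec_induct)
    case (step H)
    have "fold (greedy_column n lam T) [2..<Suc (Suc H)] (pi_init n lam T)
        = greedy_column n lam T (Suc H) (fold (greedy_column n lam T) [2..<Suc H] (pi_init n lam T))"
      using step.hyps(1) by (simp del: upt_Suc add: upt_Suc_append)
    then show ?case using column_invariant_step[OF step.IH step.hyps(1)] by (simp only:)
  qed (use column_invariant_init in simp)
  then show ?thesis unfolding pi_T_eq_fold_greedy_column using lam_1_pos by blast
qed

end

context ss_tableau
begin

lemma pi_T_permutes: "pi_T n lam T permutes {1..n}"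
  using column_invariant_pi_T unfolding column_invariant_def by blast

lemma increasing_off_pi_T: "increasing_off n (col_lengths_upto n lam (lam 1)) (pi_T n lam T)"
  using column_invariant_pi_T unfolding column_invariant_def by blast

lemma right_key_eq:
  assumes "1 \<le> j" "j \<le> lam 1"
  shows "right_key n lam T j i = sorted_list_of_set (pi_T n lam T ` {1..cl j}) ! (i - 1)"
proof -
  have "pi_T n lam T ` {1..cl j} = set (scan_ends_upto n lam T (lam 1) j)"
    and "sorted_wrt (<) (scan_ends_upto n lam T (lam 1) j)"
    using column_invariant_pi_T assms unfolding column_invariant_def by blast+
  then show ?thesis unfolding right_key_def scan_ends_eq_scan_ends_upto
    by (simp add: sorted_list_of_set_sort_remdups strict_sorted_iff distinct_remdups_id sorted_sort_id)
qed

lemma tab_le_right_key_iff: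
  assumes "w permutes {1..n}"
  shows "tab_le n lam (right_key n lam T) (Y_key n lam w) \<longleftrightarrow>
    (\<forall>k\<in>col_lengths_upto n lam (lam 1). \<forall>x. prefix_count w k x \<le> prefix_count (pi_T n lam T) k x)"
proof -
  have column: "(\<forall>i. 1 \<le> i \<and> i \<le> cl j \<longrightarrow> right_key n lam T j i \<le> Y_key n lam w j i)
      \<longleftrightarrow> (\<forall>x. prefix_count w (cl j) x \<le> prefix_count (pi_T n lam T) (cl j) x)"
    if "1 \<le> j" "j \<le> lam 1" for j
    using sorted_image_le_iff_prefix_count_le[OF permutes_inj_on[OF pi_T_permutes] permutes_inj_on[OF assms]]
      right_key_eq[OF that] unfolding Y_key_def by simp
  have "tab_le n lam (right_key n lam T) (Y_key n lam w) \<longleftrightarrow> (\<forall>j. 1 \<le> j \<and> j \<le> lam 1 \<longrightarrow>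
      (\<forall>i. 1 \<le> i \<and> i \<le> cl j \<longrightarrow> right_key n lam T j i \<le> Y_key n lam w j i))"
  proof
    assume "tab_le n lam (right_key n lam T) (Y_key n lam w)"
    then show "\<forall>j. 1 \<le> j \<and> j \<le> lam 1 \<longrightarrow>
      (\<forall>i. 1 \<le> i \<and> i \<le> cl j \<longrightarrow> right_key n lam T j i \<le> Y_key n lam w j i)"
      unfolding tab_le_def in_shape_iff by blast
  next
    assume H: "\<forall>j. 1 \<le> j \<and> j \<le> lam 1 \<longrightarrow>
      (\<forall>i. 1 \<le> i \<and> i \<le> cl j \<longrightarrow> right_key n lam T j i \<le> Y_key n lam w j i)"
    show "tab_le n lam (right_key n lam T) (Y_key n lam w)"
      unfolding tab_le_def in_shape_iff
    proof (intro allI impI)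
      fix j i assume ji: "1 \<le> j \<and> 1 \<le> i \<and> i \<le> cl j"
      then have "j \<le> lam 1" using col_len_eq_0[of j] by (cases "j \<le> lam 1") auto
      then show "right_key n lam T j i \<le> Y_key n lam w j i" using H ji by blast
    qed
  qed
  also have "\<dots> \<longleftrightarrow> (\<forall>k\<in>col_lengths_upto n lam (lam 1). \<forall>x. prefix_count w k x \<le> prefix_count (pi_T n lam T) k x)"
    unfolding col_lengths_upto_def using column by blast
  finally show ?thesis .
qed

end

theorem theorem6p2:
  fixes n :: nat and lam :: "nat \<Rightarrow> nat" and T :: "nat \<Rightarrow> nat \<Rightarrow> nat" and w :: "nat \<Rightarrow> nat"
  assumes "0 < n"
    and "is_partition n lam"
    and "semistandard n lam T"
    and "in_S_lambda n lam w"
  shows "T \<in> D_set n lam w \<longleftrightarrow> bruhat_le n (pi_T n lam T) w"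
proof -
  interpret ss_tableau n lam T using assms(2,3) by unfold_locales
  let ?cols = "col_lengths_upto n lam (lam 1)"
  have w: "w permutes {1..n}" "increasing_off n ?cols w"
    using assms(4) unfolding in_S_lambda_def increasing_off_def col_lengths_upto_def by auto
  have "T \<in> D_set n lam w \<longleftrightarrow>
      (\<forall>k\<in>?cols. \<forall>x. prefix_count w k x \<le> prefix_count (pi_T n lam T) k x)"
    using tab_le_right_key_iff[OF w(1)] assms(3) unfolding D_set_def by simp
  also have "\<dots> \<longleftrightarrow> (\<forall>k x. k \<le> n \<longrightarrow> prefix_count w k x \<le> prefix_count (pi_T n lam T) k x)"
    using prefix_count_le_if_le_on_breaks[OF pi_T_permutes increasing_off_pi_T w] col_len_le
    unfolding col_lengths_upto_def by blast
  also have "\<dots> \<longleftrightarrow> bruhat_le n (pi_T n lam T) w"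
    using bruhat_le_iff_prefix_count_le[OF pi_T_permutes w(1)] by simp
  finally show ?thesis .
qed

end
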